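(* Let $A,\Delta A\in\mathbb{R}^{n\times m}$, $\widetilde A=A+\Delta A$, $1\le r<\min\{n,m\}$, $\operatorname{rank}(A)\ge r$, and assume $\sigma_r-\widetilde\sigma_{r+1}>0$ and $\widetilde\sigma_r-\sigma_{r+1}>0$. Then, with the notation of the context, \[\|\sin\Theta(U_1,\widetilde U_1)\|=\big\|F_U^{12}\circ(U_1^T(\Delta A)\widetilde V_2\widetilde\Sigma_2^T+\Sigma_1 V_1^T(\Delta A)^T\widetilde U_2)\big\|=\big\|F_U^{21}\circ(U_2^T(\Delta A)\widetilde V_1\widetilde\Sigma_1^T+\Sigma_2 V_2^T(\Delta A)^T\widetilde U_1)\big\|,\] \[\|\sin\Theta(V_1,\widetilde V_1)\|=\big\|F_V^{12}\circ(\Sigma_1^T U_1^T(\Delta A)\widetilde V_2+ V_1^T(\Delta A)^T\widetilde U_2\widetilde\Sigma_2)\big\|=\big\|F_V^{21}\circ(\Sigma_2^T U_2^T(\Delta A)\widetilde V_1+ V_2^T(\Delta A)^T\widetilde U_1\widetilde\Sigma_1)\big\|.\]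
   Context: $A=U\Sigma V^T$, $\widetilde A=\widetilde U\widetilde\Sigma\widetilde V^T$ are full SVDs ($U,\widetilde U\in\mathbb{R}^{n\times n}$, $V,\widetilde V\in\mathbb{R}^{m\times m}$ orthogonal, $\Sigma,\widetilde\Sigma\in\mathbb{R}^{n\times m}$ rectangular diagonal with nonincreasing nonnegative diagonals $\sigma_1\ge\dots$, $\widetilde\sigma_1\ge\dots$); $\sigma_i=\widetilde\sigma_i=0$ for $i>\min\{n,m\}$. Partition $U=(U_1\ U_2)$, $U_1\in\mathbb{R}^{n\times r}$; $V=(V_1\ V_2)$, $V_1\in\mathbb{R}^{m\times r}$; $\Sigma_1=\mathrm{diag}(\sigma_1,\dots,\sigma_r)$, $\Sigma_2\in\mathbb{R}^{(n-r)\times(m-r)}$ rectangular diagonal with diagonal $\sigma_{r+1},\sigma_{r+2},\dots$; likewise with tildes. $\circ$ is the Hadamard product; $\|\cdot\|$ is the spectral norm. $(F_U^{12})_{i,j-r}=1/(\widetilde\sigma_j^2-\sigma_i^2)$ for $1\le i\le r<j\le n$; $(F_U^{21})_{i-r,j}=1/(\widetilde\sigma_j^2-\sigma_i^2)$ for $r<i\le n$, $1\le j\le r$; $F_V^{12},F_V^{21}$ are defined the same way with $n$ replaced by $m$. For $X,\widetilde X\in\mathbb{R}^{d\times r}$ with orthonormal columns, if $\zeta_1\ge\dots\ge\zeta_r$ are the singular values of $X^T\widetilde X$, then $\sin\Theta(X,\widetilde X)=\mathrm{diag}(\sqrt{1-\zeta_1^2},\dots,\sqrt{1-\zeta_r^2})$.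 *)

theory Defs
  imports Complex_Main "Jordan_Normal_Form.DL_Rank"
begin

(* Matrices are Jordan_Normal_Form matrices ("real mat") with explicit dimensions.
   All indices are 0-based: paper index k corresponds to Isabelle index k-1. *)

definition orth_mat :: "real mat \<Rightarrow> nat \<Rightarrow> bool" where
  "orth_mat U k \<longleftrightarrow> U \<in> carrier_mat k k \<and> transpose_mat U * U = 1\<^sub>m k"

definition is_full_svd :: "real mat \<Rightarrow> real mat \<Rightarrow> real mat \<Rightarrow> real mat \<Rightarrow> bool" where
  "is_full_svd A U S V \<longleftrightarrow>
     orth_mat U (dim_row A) \<and> orth_mat V (dim_col A) \<and>
     S \<in> carrier_mat (dim_row A) (dim_col A) \<and>
     (\<forall>i<dim_row A. \<forall>j<dim_col A. i \<noteq> j \<longrightarrow> S $$ (i,j) = 0) \<and>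
     (\<forall>i<min (dim_row A) (dim_col A). 0 \<le> S $$ (i,i)) \<and>
     (\<forall>i j. i \<le> j \<and> j < min (dim_row A) (dim_col A) \<longrightarrow> S $$ (j,j) \<le> S $$ (i,i)) \<and>
     A = U * S * transpose_mat V"

definition sval :: "real mat \<Rightarrow> nat \<Rightarrow> real" where
  "sval S i = (if i < min (dim_row S) (dim_col S) then S $$ (i,i) else 0)"

definition singular_values :: "real mat \<Rightarrow> nat \<Rightarrow> real" where
  "singular_values M i = sval (SOME S. \<exists>U V. is_full_svd M U S V) i"

definition sin_Theta :: "real mat \<Rightarrow> real mat \<Rightarrow> real mat" where
  "sin_Theta X Y = mat (dim_col X) (dim_col X)
     (\<lambda>(i,j). if i = j then sqrt (1 - (singular_values (transpose_mat X * Y) i)\<^sup>2) else 0)"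

definition vnorm :: "real vec \<Rightarrow> real" where
  "vnorm x = sqrt (x \<bullet> x)"

definition spec_norm :: "real mat \<Rightarrow> real" where
  "spec_norm M = Sup {vnorm (M *\<^sub>v x) | x. x \<in> carrier_vec (dim_col M) \<and> vnorm x = 1}"

definition hadamard :: "real mat \<Rightarrow> real mat \<Rightarrow> real mat" (infixl "\<circ>\<^sub>H" 70) where
  "hadamard A B = mat (dim_row A) (dim_col A) (\<lambda>ij. A $$ ij * B $$ ij)"

definition blk :: "real mat \<Rightarrow> nat \<Rightarrow> nat \<Rightarrow> nat \<Rightarrow> nat \<Rightarrow> real mat" where
  "blk M r0 c0 nr nc = mat nr nc (\<lambda>(i,j). M $$ (i + r0, j + c0))"

(* F^{12}: (F^{12})_{i,j-r} = 1/(st_j^2 - s_i^2), 1<=i<=r<j<=d  (here 0-based) *)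
definition F12 :: "real mat \<Rightarrow> real mat \<Rightarrow> nat \<Rightarrow> nat \<Rightarrow> real mat" where
  "F12 S St r d = mat r (d - r) (\<lambda>(i,j). 1 / ((sval St (j + r))\<^sup>2 - (sval S i)\<^sup>2))"

(* F^{21}: (F^{21})_{i-r,j} = 1/(st_j^2 - s_i^2), r<i<=d, 1<=j<=r  (here 0-based) *)
definition F21 :: "real mat \<Rightarrow> real mat \<Rightarrow> nat \<Rightarrow> nat \<Rightarrow> real mat" where
  "F21 S St r d = mat (d - r) r (\<lambda>(i,j). 1 / ((sval St j)\<^sup>2 - (sval S (i + r))\<^sup>2))"

end

theory Submission
  imports Defs "Jordan_Normal_Form.Char_Poly"
begin

text \<open>
  Let \<open>\<gamma>\<^sub>i\<close> be the singular values of \<open>U\<^sub>1\<^sup>T Ut\<^sub>1\<close>. Since \<open>U\<close> and \<open>Ut\<close> are orthogonal, the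
  matrices \<open>sin \<Theta>(U\<^sub>1, Ut\<^sub>1)\<close>, \<open>U\<^sub>2\<^sup>T Ut\<^sub>1\<close> and \<open>(U\<^sub>1\<^sup>T Ut\<^sub>2)\<^sup>T\<close> have Gram matrices
  orthogonally similar to \<open>diag (1 - \<gamma>\<^sub>i\<^sup>2)\<close>, hence equal spectral norms.
  On the other hand the singular vector relations \<open>A V\<^sub>1 = U\<^sub>1 S\<^sub>1\<close>, \<open>A\<^sup>T U\<^sub>1 = V\<^sub>1 S\<^sub>1\<^sup>T\<close> and
  their analogues for \<open>A + \<Delta>A\<close> turn \<open>U\<^sub>1\<^sup>T \<Delta>A Vt\<^sub>2 St\<^sub>2\<^sup>T + S\<^sub>1 V\<^sub>1\<^sup>T \<Delta>A\<^sup>T Ut\<^sub>2\<close> into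
  the Sylvester expression \<open>X St\<^sub>2 St\<^sub>2\<^sup>T - S\<^sub>1 S\<^sub>1\<^sup>T X\<close> with \<open>X = U\<^sub>1\<^sup>T Ut\<^sub>2\<close> and
  diagonal coefficients. The gap conditions make all \<open>st\<^sub>j\<^sup>2 - s\<^sub>i\<^sup>2\<close> nonzero, so the
  Hadamard product with \<open>F\<^sub>U\<^sup>1\<^sup>2\<close> recovers \<open>X\<close>; likewise for the \<open>(2,1)\<close> block. The
  statements for \<open>V\<close> are those for \<open>U\<close> applied to the transposed matrices.
\<close>

section \<open>Spectral theorem for real symmetric matrices\<close>

text \<open>For an eigenvector \<open>v\<close>, the number \<open>v\<^sup>* A v = l \<bar>v\<bar>\<^sup>2\<close> equals its own conjugate.\<close>
lemma real_symmetric_eigenvalue_real: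
  fixes A :: "real mat"
  assumes A: "A \<in> carrier_mat n n" and sym: "transpose_mat A = A"
    and l: "eigenvalue (map_mat complex_of_real A) l"
  shows "Im l = 0"
proof -
  let ?A = "map_mat complex_of_real A"
  obtain v where v: "v \<in> carrier_vec n" "v \<noteq> 0\<^sub>v n" "?A *\<^sub>v v = l \<cdot>\<^sub>v v"
    using l A unfolding eigenvalue_def eigenvector_def by auto
  define s where "s = (\<Sum>i<n. cnj (v$i) * (?A *\<^sub>v v)$i)"
  define R where "R = (\<Sum>i<n. (cmod (v$i))\<^sup>2)"
  have "s = l * (\<Sum>i<n. cnj (v$i) * v$i)"
    unfolding s_def v(3) sum_distrib_left using v(1) by (auto intro: sum.cong)
  also have "(\<Sum>i<n. cnj (v$i) * v$i) = of_real R"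
    unfolding R_def of_real_sum
    by (rule sum.cong) (auto simp: complex_norm_square mult.commute[of "cnj _"] simp del: of_real_power)
  finally have s: "s = l * of_real R" .
  have s_sum: "s = (\<Sum>i<n. \<Sum>j<n. cnj (v$i) * of_real (A$$(i,j)) * v$j)"
    unfolding s_def using A v(1)
    by (auto simp: scalar_prod_def sum_distrib_left atLeast0LessThan mult.assoc intro: sum.cong)
  have "cnj s = (\<Sum>i<n. \<Sum>j<n. v$i * of_real (A$$(i,j)) * cnj (v$j))"
    unfolding s_sum by simp
  also have "\<dots> = (\<Sum>j<n. \<Sum>i<n. v$i * of_real (A$$(i,j)) * cnj (v$j))"
    by (rule sum.swap)
  also have "\<dots> = s"
    unfolding s_sum
  proof (intro sum.cong refl)
    fix i j assume "i \<in> {..<n}" "j \<in> {..<n}"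
    then have "A $$ (j,i) = A $$ (i,j)"
      using arg_cong[OF sym, of "\<lambda>M. M $$ (i,j)"] A by auto
    then show "v $ j * of_real (A $$ (j, i)) * cnj (v $ i) = cnj (v $ i) * of_real (A $$ (i, j)) * v $ j"
      by simp
  qed
  finally have "Im s = 0" by (metis cnj.sel(2) equation_minus_iff neg_equal_zero)
  obtain i where i: "i < n" "v $ i \<noteq> 0"
    using v(1,2) by (metis eq_vecI carrier_vecD index_zero_vec)
  have "R > 0" unfolding R_def by (rule sum_pos2[of _ i]) (use i in auto)
  with \<open>Im s = 0\<close> show ?thesis unfolding s by simp
qed

lemma real_symmetric_has_eigenvalue:
  fixes A :: "real mat"
  assumes A: "A \<in> carrier_mat n n" and sym: "transpose_mat A = A" and n: "0 < n"
  shows "\<exists>e. eigenvalue A e"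
proof -
  let ?A = "map_mat complex_of_real A"
  have Ac: "?A \<in> carrier_mat n n" using A by simp
  obtain as where cp: "char_poly ?A = (\<Prod>a\<leftarrow>as. [:- a, 1:])" and len: "length as = n"
    using char_poly_factorized[OF Ac] by blast
  then obtain l rest where as: "as = l # rest" using n by (cases as) auto
  have root: "poly (char_poly ?A) l = 0" unfolding cp as by simp
  then have "Im l = 0"
    using real_symmetric_eigenvalue_real[OF A sym] eigenvalue_root_char_poly[OF Ac] by simp
  then have "l = of_real (Re l)" by (simp add: complex_eq_iff)
  then have "of_real (poly (char_poly A) (Re l)) = (0::complex)"
    using root unfolding of_real_hom.char_poly_hom[OF A]
    by (metis of_real_hom.poly_map_poly)
  then show ?thesis using eigenvalue_root_char_poly[OF A] by auto
qed

lemma scalar_prod_self_pos: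
  fixes v :: "real vec"
  assumes "v \<in> carrier_vec n" "v \<noteq> 0\<^sub>v n"
  shows "v \<bullet> v > 0"
  using conjugate_square_greater_0_vec[OF assms(1)] assms(2) by simp

lemma scalar_prod_self_nonneg: "(v :: real vec) \<bullet> v \<ge> 0"
  using conjugate_square_ge_0_vec[of v] by simp

definition orthonormal :: "real vec list \<Rightarrow> bool" where
  "orthonormal ws \<longleftrightarrow> (\<forall>i<length ws. \<forall>j<length ws. ws!i \<bullet> ws!j = (if i = j then 1 else 0))"

lemma normalized_vec_unit:
  fixes v :: "real vec"
  assumes v: "v \<in> carrier_vec n" "v \<noteq> 0\<^sub>v n"
  defines "u \<equiv> (1 / sqrt (v \<bullet> v)) \<cdot>\<^sub>v v"
  shows "u \<in> carrier_vec n" and "u \<bullet> u = 1"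
  using v scalar_prod_self_pos[OF v] by (auto simp: u_def real_sqrt_mult[symmetric])

lemma orthonormal_snoc:
  assumes "orthonormal ps" and "w \<bullet> w = 1" and "\<And>i. i < length ps \<Longrightarrow> ps ! i \<bullet> w = 0"
    and "\<And>i. i < length ps \<Longrightarrow> w \<bullet> ps ! i = 0"
  shows "orthonormal (ps @ [w])"
  using assms unfolding orthonormal_def
  by (auto simp: nth_append less_Suc_eq)

text \<open>The square matrix with rows \<open>ps\<close>, padded by zero rows, is singular; a kernel vector
  is orthogonal to all of \<open>ps\<close>.\<close>
lemma orthonormal_extend:
  assumes ps: "set ps \<subseteq> carrier_vec n" and on: "orthonormal ps" and k: "length ps < n"
  shows "\<exists>w \<in> carrier_vec n. orthonormal (ps @ [w])"
proof -
  let ?k = "length ps"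
  define c where "c = (\<lambda>i. if i < ?k then ps ! i else 0\<^sub>v n)"
  define B where "B = mat\<^sub>r n n (\<lambda>i. if i = n - 1 then 0\<^sub>v n else c i)"
  have psi: "ps ! i \<in> carrier_vec n" if "i < ?k" for i using ps nth_mem[OF that] by auto
  have B: "B \<in> carrier_mat n n" unfolding B_def by auto
  have "det B = 0" unfolding B_def by (rule det_row_0) (use k psi in \<open>auto simp: c_def\<close>)
  then obtain v where v: "v \<in> carrier_vec n" "v \<noteq> 0\<^sub>v n" "B *\<^sub>v v = 0\<^sub>v n"
    using det_0_iff_vec_prod_zero[OF B] by blast
  have orth: "ps ! i \<bullet> v = 0" if i: "i < ?k" for i
  proof -
    have "row B i = ps ! i" unfolding B_def using i k psi[OF i]
      by (subst row_mat_of_row_fun) (auto simp: c_def)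
    then show ?thesis using arg_cong[OF v(3), of "\<lambda>x. x $ i"] i k B by simp
  qed
  define w where "w = (1 / sqrt (v \<bullet> v)) \<cdot>\<^sub>v v"
  have w: "w \<in> carrier_vec n" "w \<bullet> w = 1" using normalized_vec_unit[OF v(1,2)] unfolding w_def by auto
  have pw: "ps ! i \<bullet> w = 0" if "i < ?k" for i
    unfolding w_def using orth[OF that] psi[OF that] v(1) by simp
  have "orthonormal (ps @ [w])"
    by (rule orthonormal_snoc[OF on w(2) pw]) (use pw comm_scalar_prod[OF w(1) psi] in auto)
  with w show ?thesis by blast
qed

lemma orthonormal_complete:
  assumes "set ps \<subseteq> carrier_vec n" and "orthonormal ps" and "length ps \<le> n"
  shows "\<exists>ws. set ws \<subseteq> carrier_vec n \<and> orthonormal ws \<and> length ws = n \<and> take (length ps) ws = ps"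
  using assms
proof (induction "n - length ps" arbitrary: ps)
  case 0
  then show ?case by auto
next
  case (Suc d)
  then have lt: "length ps < n" by simp
  then obtain w where w: "w \<in> carrier_vec n" "orthonormal (ps @ [w])"
    using orthonormal_extend[of ps n] Suc.prems by auto
  have d: "d = n - length (ps @ [w])" using Suc(2) by simp
  obtain ws where ws: "set ws \<subseteq> carrier_vec n" "orthonormal ws" "length ws = n"
    "take (Suc (length ps)) ws = ps @ [w]"
    using Suc.hyps(1)[OF d] Suc.prems w lt by auto
  have "take (length ps) ws = take (length ps) (take (Suc (length ps)) ws)" by simp
  also have "\<dots> = ps" unfolding ws(4) by simp
  finally have "take (length ps) ws = ps" .
  with ws show ?case by blast
qed

lemma orth_mat_of_cols:
  assumes ws: "set ws \<subseteq> carrier_vec n" "orthonormal ws" "length ws = n"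
  shows "orth_mat (mat_of_cols n ws) n"
proof -
  let ?W = "mat_of_cols n ws"
  have W: "?W \<in> carrier_mat n n" using ws(3) mat_of_cols_carrier(1)[of n ws] by simp
  have col: "col ?W j = ws ! j" if "j < n" for j
    using ws that by (intro col_mat_of_cols) auto
  have "transpose_mat ?W * ?W = 1\<^sub>m n"
  proof (rule eq_matI)
    fix i j assume "i < dim_row (1\<^sub>m n :: real mat)" "j < dim_col (1\<^sub>m n :: real mat)"
    then show "(transpose_mat ?W * ?W) $$ (i, j) = 1\<^sub>m n $$ (i, j)"
      using W ws(2,3) col unfolding orthonormal_def by simp
  qed (use W ws(3) in simp_all)
  with W show ?thesis unfolding orth_mat_def by simp
qed

lemma orth_matD:
  assumes "orth_mat Q n"
  shows "Q \<in> carrier_mat n n" "transpose_mat Q * Q = 1\<^sub>m n" "Q * transpose_mat Q = 1\<^sub>m n"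
  using assms mat_mult_left_right_inverse[of "transpose_mat Q" n Q] unfolding orth_mat_def by auto

lemma orth_mat_mult:
  assumes P: "orth_mat P n" and Q: "orth_mat Q n"
  shows "orth_mat (P * Q) n"
proof -
  note P' = orth_matD[OF P] and Q' = orth_matD[OF Q]
  have "transpose_mat (P * Q) * (P * Q) = transpose_mat Q * (transpose_mat P * P) * Q"
    using P'(1) Q'(1) by (simp add: transpose_mult assoc_mult_mat[of _ n n _ n _ n])
  then show ?thesis unfolding orth_mat_def using P' Q' by simp
qed

lemma mat_diag_mult_unit_vec:
  fixes d :: "nat \<Rightarrow> 'a :: semiring_1"
  assumes "i < n"
  shows "mat_diag n d *\<^sub>v unit_vec n i = d i \<cdot>\<^sub>v unit_vec n i"
  using assms by (intro eq_vecI) (auto simp: mat_diag_def)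

lemma mat_diag_mult_vec:
  fixes d :: "nat \<Rightarrow> 'a :: semiring_1"
  assumes "y \<in> carrier_vec n"
  shows "mat_diag n d *\<^sub>v y = vec n (\<lambda>i. d i * y $ i)"
proof (rule eq_vecI)
  fix i assume "i < dim_vec (vec n (\<lambda>i. d i * y $ i))"
  then have i: "i < n" by simp
  have "(mat_diag n d *\<^sub>v y) $ i = (\<Sum>j\<in>{0..<n}. (if i = j then d j else 0) * y $ j)"
    using i assms by (simp add: mat_diag_def scalar_prod_def)
  also have "\<dots> = d i * y $ i" using i by (simp add: if_distrib[of "\<lambda>a. a * _"] cong: if_cong)
  finally show "(mat_diag n d *\<^sub>v y) $ i = vec n (\<lambda>i. d i * y $ i) $ i" using i by simp
qed (simp add: mat_diag_def)

lemma eigenvalue_orth_diag: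
  fixes Q :: "real mat"
  assumes Q: "orth_mat Q n" and A: "A = Q * mat_diag n d * transpose_mat Q" and j: "j < n"
  shows "eigenvalue A (d j)"
proof -
  note Q' = orth_matD[OF Q]
  define e where "e = (unit_vec n j :: real vec)"
  define x where "x = Q *\<^sub>v e"
  have e: "e \<in> carrier_vec n" and x: "x \<in> carrier_vec n" using Q'(1) by (auto simp: e_def x_def)
  have Qx: "transpose_mat Q *\<^sub>v x = e"
    unfolding x_def using Q' e by (simp flip: assoc_mult_mat_vec)
  have De: "mat_diag n d *\<^sub>v e = d j \<cdot>\<^sub>v e"
    unfolding e_def by (rule mat_diag_mult_unit_vec[OF j])
  have "A *\<^sub>v x = (Q * mat_diag n d) *\<^sub>v (transpose_mat Q *\<^sub>v x)"
    unfolding A by (rule assoc_mult_mat_vec[of _ n n]) (use Q'(1) x in auto)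
  also have "\<dots> = Q *\<^sub>v (mat_diag n d *\<^sub>v (transpose_mat Q *\<^sub>v x))"
    by (rule assoc_mult_mat_vec[of _ n n _ n]) (use Q'(1) x in auto)
  also have "\<dots> = d j \<cdot>\<^sub>v x" unfolding Qx De using Q'(1) e by (simp add: x_def mult_mat_vec)
  finally have Ax: "A *\<^sub>v x = d j \<cdot>\<^sub>v x" .
  have "x \<noteq> 0\<^sub>v n"
  proof
    assume "x = 0\<^sub>v n"
    then have "e = transpose_mat Q *\<^sub>v 0\<^sub>v n" using Qx by simp
    also have "\<dots> = 0\<^sub>v n" using Q'(1) by auto
    finally have "e = 0\<^sub>v n" .
    then show False using j unfolding e_def by (metis index_unit_vec(1) index_zero_vec(1) zero_neq_one)
  qed
  moreover have "A \<in> carrier_mat n n" unfolding A using Q'(1) by (auto intro!: mult_carrier_mat[of _ n n])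
  ultimately show ?thesis unfolding eigenvalue_def eigenvector_def using x Ax by auto
qed

lemma real_symmetric_max_eigenvalue:
  fixes A :: "real mat"
  assumes A: "A \<in> carrier_mat (Suc k) (Suc k)" and sym: "transpose_mat A = A"
  obtains l where "eigenvalue A l" "\<And>e. eigenvalue A e \<Longrightarrow> e \<le> l"
proof -
  have "char_poly A \<noteq> 0" using degree_monic_char_poly[OF A] by auto
  then have "finite {e. eigenvalue A e}"
    unfolding eigenvalue_root_char_poly[OF A] by (rule poly_roots_finite)
  moreover have "{e. eigenvalue A e} \<noteq> {}" using real_symmetric_has_eigenvalue[OF A sym] by auto
  ultimately show ?thesis using that[of "Max {e. eigenvalue A e}"] Max_in Max_ge by auto
qed

lemma orth_mat_with_first_col:
  fixes u :: "real vec"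
  assumes u: "u \<in> carrier_vec (Suc k)" "u \<bullet> u = 1"
  obtains W where "orth_mat W (Suc k)" "col W 0 = u"
proof -
  have "orthonormal [u]" using u unfolding orthonormal_def by auto
  then obtain ws where ws: "set ws \<subseteq> carrier_vec (Suc k)" "orthonormal ws" "length ws = Suc k"
    "take 1 ws = [u]"
    using orthonormal_complete[of "[u]" "Suc k"] u by auto
  have "ws ! 0 = u" using ws(4) by (cases ws) auto
  then have "col (mat_of_cols (Suc k) ws) 0 = u" using col_mat_of_cols[of 0 ws "Suc k"] ws(3) u(1) by simp
  with orth_mat_of_cols[OF ws(1-3)] that show ?thesis by blast
qed

lemma symmetric_first_col_blocks:
  fixes A :: "'a :: zero mat"
  assumes A: "A \<in> carrier_mat (Suc k) (Suc k)" and sym: "transpose_mat A = A"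
    and col0: "\<And>i. i < Suc k \<Longrightarrow> A $$ (i,0) = (if i = 0 then l else 0)"
  defines "B \<equiv> mat k k (\<lambda>(i,j). A $$ (Suc i, Suc j))"
  shows "A = four_block_mat (mat 1 1 (\<lambda>_. l)) (0\<^sub>m 1 k) (0\<^sub>m k 1) B" and "transpose_mat B = B"
proof -
  have entry_sym: "A $$ (j,i) = A $$ (i,j)" if "i < Suc k" "j < Suc k" for i j
    using arg_cong[OF sym, of "\<lambda>M. M $$ (i,j)"] A that by simp
  show "A = four_block_mat (mat 1 1 (\<lambda>_. l)) (0\<^sub>m 1 k) (0\<^sub>m k 1) B"
  proof (rule eq_matI)
    fix i j assume "i < dim_row (four_block_mat (mat 1 1 (\<lambda>_. l)) (0\<^sub>m 1 k) (0\<^sub>m k 1) B)"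
      "j < dim_col (four_block_mat (mat 1 1 (\<lambda>_. l)) (0\<^sub>m 1 k) (0\<^sub>m k 1) B)"
    then have i: "i < Suc k" and j: "j < Suc k" by (auto simp: B_def)
    show "A $$ (i,j) = four_block_mat (mat 1 1 (\<lambda>_. l)) (0\<^sub>m 1 k) (0\<^sub>m k 1) B $$ (i,j)"
      using col0[OF i] col0[OF j] entry_sym[OF i j] i j by (cases i; cases j) (auto simp: B_def)
  qed (use A in \<open>auto simp: B_def\<close>)
  show "transpose_mat B = B"
    using entry_sym by (auto simp: B_def intro!: eq_matI)
qed

lemma real_symmetric_deflate:
  fixes A :: "real mat"
  assumes A: "A \<in> carrier_mat (Suc k) (Suc k)" and sym: "transpose_mat A = A"
    and l: "eigenvalue A l"
  obtains W B where "orth_mat W (Suc k)" "B \<in> carrier_mat k k" "transpose_mat B = B"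
    "A = W * four_block_mat (mat 1 1 (\<lambda>_. l)) (0\<^sub>m 1 k) (0\<^sub>m k 1) B * transpose_mat W"
proof -
  let ?n = "Suc k"
  define v where "v = find_eigenvector A l"
  have v: "v \<in> carrier_vec ?n" "v \<noteq> 0\<^sub>v ?n" "A *\<^sub>v v = l \<cdot>\<^sub>v v"
    using find_eigenvector[OF A l] A unfolding v_def eigenvector_def by auto
  define u where "u = (1 / sqrt (v \<bullet> v)) \<cdot>\<^sub>v v"
  have u: "u \<in> carrier_vec ?n" "u \<bullet> u = 1" using normalized_vec_unit[OF v(1,2)] unfolding u_def by auto
  have Au: "A *\<^sub>v u = l \<cdot>\<^sub>v u"
    unfolding u_def using v by (simp add: mult_mat_vec[OF A] smult_smult_assoc mult.commute)
  obtain W where oW: "orth_mat W ?n" and W_u: "col W 0 = u" using orth_mat_with_first_col[OF u] .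
  note W' = orth_matD[OF oW]
  define A' where "A' = transpose_mat W * A * W"
  have A': "A' \<in> carrier_mat ?n ?n" unfolding A'_def using W' A by simp
  have "transpose_mat A' = transpose_mat W * transpose_mat (transpose_mat W * A)"
    unfolding A'_def by (rule transpose_mult) (use W'(1) A in auto)
  then have symA': "transpose_mat A' = A'"
    unfolding A'_def using W'(1) A sym
    by (simp add: transpose_mult[of _ ?n ?n _ ?n] assoc_mult_mat[of _ ?n ?n _ ?n _ ?n])
  have "A' $$ (i,0) = (if i = 0 then l else 0)" if i: "i < ?n" for i
  proof -
    have "A' $$ (i,0) = col W i \<bullet> (A *\<^sub>v col W 0)"
      unfolding A'_def using W'(1) A i
      by (simp add: assoc_mult_mat[of _ ?n ?n _ ?n _ ?n] col_mult2 mult_mat_vec_def)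
    also have "\<dots> = l * (transpose_mat W * W) $$ (i,0)"
      unfolding W_u Au using W'(1) u(1) i by (simp add: W_u[symmetric])
    finally show ?thesis using W'(2) i by simp
  qed
  note blocks = symmetric_first_col_blocks[OF A' symA' this]
  have "A = (W * transpose_mat W) * A * (W * transpose_mat W)" using W' A by simp
  also have "\<dots> = W * A' * transpose_mat W"
    unfolding A'_def using W'(1) A by (simp add: assoc_mult_mat[of _ ?n ?n _ ?n _ ?n])
  finally show ?thesis using that[OF oW _ blocks(2)] blocks(1) by auto
qed

lemma orth_diag_extend:
  fixes Q :: "real mat"
  assumes Q: "orth_mat Q k" and B: "B = Q * mat_diag k e * transpose_mat Q"
  defines "Q' \<equiv> four_block_mat (1\<^sub>m 1) (0\<^sub>m 1 k) (0\<^sub>m k 1) Q"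
  shows "orth_mat Q' (Suc k)"
    and "four_block_mat (mat 1 1 (\<lambda>_. l)) (0\<^sub>m 1 k) (0\<^sub>m k 1) B
      = Q' * mat_diag (Suc k) (\<lambda>i. if i = 0 then l else e (i - 1)) * transpose_mat Q'"
proof -
  note Q'' = orth_matD[OF Q]
  have Q'_carrier: "Q' \<in> carrier_mat (Suc k) (Suc k)"
    unfolding Q'_def using four_block_carrier_mat[OF one_carrier_mat[of 1] Q''(1)] by simp
  have TQ': "transpose_mat Q' = four_block_mat (1\<^sub>m 1) (0\<^sub>m 1 k) (0\<^sub>m k 1) (transpose_mat Q)"
    unfolding Q'_def by (subst transpose_four_block_mat) (use Q''(1) in auto)
  have "transpose_mat Q' * Q' = 1\<^sub>m (Suc k)"
    unfolding TQ' unfolding Q'_def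
    by (subst mult_four_block_mat[of _ 1 1 _ k _ k _ _ 1 _ k]) (use Q'' in auto)
  with Q'_carrier show "orth_mat Q' (Suc k)" unfolding orth_mat_def by simp
  let ?L = "mat 1 1 (\<lambda>_. l) :: real mat"
  have diag: "mat_diag (Suc k) (\<lambda>i. if i = 0 then l else e (i - 1))
      = four_block_mat ?L (0\<^sub>m 1 k) (0\<^sub>m k 1) (mat_diag k e)"
    by (rule eq_matI) (auto simp: mat_diag_def)
  have "Q' * mat_diag (Suc k) (\<lambda>i. if i = 0 then l else e (i - 1))
      = four_block_mat ?L (0\<^sub>m 1 k) (0\<^sub>m k 1) (Q * mat_diag k e)"
    unfolding diag Q'_def
    by (subst mult_four_block_mat[of _ 1 1 _ k _ k _ _ 1 _ k])
      (use Q'' in \<open>auto simp: left_mult_zero_mat[OF mat_diag_dim]\<close>)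
  also have "\<dots> * transpose_mat Q' = four_block_mat ?L (0\<^sub>m 1 k) (0\<^sub>m k 1) B"
    unfolding TQ' B using mult_carrier_mat[OF Q''(1) mat_diag_dim[of k e]]
    by (subst mult_four_block_mat[of _ 1 1 _ k _ k _ _ 1 _ k])
      (use Q''(1) in \<open>auto simp: right_mult_zero_mat[of _ k k]\<close>)
  finally show "four_block_mat ?L (0\<^sub>m 1 k) (0\<^sub>m k 1) B
      = Q' * mat_diag (Suc k) (\<lambda>i. if i = 0 then l else e (i - 1)) * transpose_mat Q'" ..
qed

text \<open>Splitting off the largest eigenvalue first keeps the diagonal nonincreasing.\<close>
theorem real_symmetric_spectral:
  fixes A :: "real mat"
  assumes "A \<in> carrier_mat n n" and "transpose_mat A = A"
  shows "\<exists>Q d. orth_mat Q n \<and> A = Q * mat_diag n d * transpose_mat Q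
    \<and> (\<forall>i j. i \<le> j \<longrightarrow> j < n \<longrightarrow> d j \<le> d i)"
  using assms
proof (induction n arbitrary: A)
  case 0
  then show ?case
    by (intro exI[of _ "1\<^sub>m 0"] exI[of _ "\<lambda>_. 0"]) (auto simp: orth_mat_def intro!: eq_matI)
next
  case (Suc k A)
  let ?n = "Suc k"
  have A: "A \<in> carrier_mat ?n ?n" and sym: "transpose_mat A = A" by fact+
  obtain l where l: "eigenvalue A l" and l_max: "\<And>e. eigenvalue A e \<Longrightarrow> e \<le> l"
    using real_symmetric_max_eigenvalue[OF A sym] by blast
  obtain W B where W: "orth_mat W ?n" and B: "B \<in> carrier_mat k k" "transpose_mat B = B"
    and A_WB: "A = W * four_block_mat (mat 1 1 (\<lambda>_. l)) (0\<^sub>m 1 k) (0\<^sub>m k 1) B * transpose_mat W"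
    using real_symmetric_deflate[OF A sym l] by blast
  obtain Q e where Q: "orth_mat Q k" and B_eq: "B = Q * mat_diag k e * transpose_mat Q"
    and sorted: "\<forall>i j. i \<le> j \<longrightarrow> j < k \<longrightarrow> e j \<le> e i"
    using Suc.IH[OF B] by blast
  define Q' where "Q' = four_block_mat (1\<^sub>m 1) (0\<^sub>m 1 k) (0\<^sub>m k 1) Q"
  define d where "d = (\<lambda>i. if i = 0 then l else e (i - 1))"
  have Q': "orth_mat Q' ?n" using orth_diag_extend(1)[OF Q B_eq] unfolding Q'_def .
  note carriers = orth_matD(1)[OF W] orth_matD(1)[OF Q']
  have A_eq: "A = (W * Q') * mat_diag ?n d * transpose_mat (W * Q')"
    unfolding A_WB orth_diag_extend(2)[OF Q B_eq, of l, folded Q'_def d_def]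
      transpose_mult[OF carriers] using carriers
    by (simp add: mult_carrier_mat[of _ ?n ?n] assoc_mult_mat[of _ ?n ?n _ ?n _ ?n])
  have "d j \<le> d i" if "i \<le> j" "j < ?n" for i j
  proof (cases "i = 0")
    case True
    have "eigenvalue A (d j)" by (rule eigenvalue_orth_diag[OF orth_mat_mult[OF W Q'] A_eq \<open>j < ?n\<close>])
    then show ?thesis using l_max True by (simp add: d_def)
  next
    case False
    then show ?thesis using that sorted by (auto simp: d_def)
  qed
  then show ?case using orth_mat_mult[OF W Q'] A_eq by blast
qed

section \<open>Spectral norm and Gram matrix\<close>

lemma orth_mat_transpose_isometry:
  fixes P :: "real mat"
  assumes P: "orth_mat P k" and x: "x \<in> carrier_vec k"
  shows "(transpose_mat P *\<^sub>v x) \<bullet> (transpose_mat P *\<^sub>v x) = x \<bullet> x"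
proof -
  note P' = orth_matD[OF P]
  have "(transpose_mat P *\<^sub>v x) \<bullet> (transpose_mat P *\<^sub>v x) = x \<bullet> (P *\<^sub>v (transpose_mat P *\<^sub>v x))"
    using transpose_vec_mult_scalar[OF P'(1), of "transpose_mat P *\<^sub>v x" x] P'(1) x by simp
  also have "P *\<^sub>v (transpose_mat P *\<^sub>v x) = x"
    using P' x by (simp flip: assoc_mult_mat_vec)
  finally show ?thesis .
qed

lemma orth_mat_transpose_unit_vec:
  assumes P: "orth_mat P k"
  shows "transpose_mat P *\<^sub>v (P *\<^sub>v unit_vec k i) = unit_vec k i"
  using orth_matD[OF P] by (simp flip: assoc_mult_mat_vec)

lemma Max_image_attained:
  fixes f :: "nat \<Rightarrow> 'a :: linorder"
  assumes "0 < k"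
  obtains i where "i < k" "f i = Max (f ` {..<k})"
proof -
  have "Max (f ` {..<k}) \<in> f ` {..<k}" using assms by (intro Max_in) auto
  with that show ?thesis by auto
qed

context
  fixes Z P :: "real mat" and d :: "nat \<Rightarrow> real" and p k :: nat
  assumes Z: "Z \<in> carrier_mat p k" and P: "orth_mat P k"
    and gram: "transpose_mat Z * Z = P * mat_diag k d * transpose_mat P"
begin

lemma gram_quadratic_form:
  assumes x: "x \<in> carrier_vec k"
  shows "(Z *\<^sub>v x) \<bullet> (Z *\<^sub>v x) = (\<Sum>i<k. d i * ((transpose_mat P *\<^sub>v x) $ i)\<^sup>2)"
proof -
  note P' = orth_matD[OF P]
  define y where "y = transpose_mat P *\<^sub>v x"
  have y: "y \<in> carrier_vec k" unfolding y_def using P'(1) x by simp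
  have "(Z *\<^sub>v x) \<bullet> (Z *\<^sub>v x) = (transpose_mat Z *\<^sub>v (Z *\<^sub>v x)) \<bullet> x"
    using transpose_vec_mult_scalar[OF Z x, of "Z *\<^sub>v x"] Z x by simp
  also have "\<dots> = x \<bullet> ((transpose_mat Z * Z) *\<^sub>v x)"
    using comm_scalar_prod[of x k] Z x by (simp add: assoc_mult_mat_vec[of _ k p _ k])
  also have "(transpose_mat Z * Z) *\<^sub>v x = P *\<^sub>v (mat_diag k d *\<^sub>v y)"
    unfolding gram y_def using P'(1) x
    by (simp add: assoc_mult_mat_vec[of _ k k _ k] mult_carrier_mat[of _ k k])
  also have "x \<bullet> (P *\<^sub>v (mat_diag k d *\<^sub>v y)) = y \<bullet> (mat_diag k d *\<^sub>v y)"
    unfolding y_def by (rule transpose_vec_mult_scalar[OF P'(1), symmetric])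
      (use x P'(1) in \<open>auto intro!: mult_mat_vec_carrier[of _ k k]\<close>)
  also have "\<dots> = (\<Sum>i<k. d i * (y $ i)\<^sup>2)"
    using y by (simp add: mat_diag_mult_vec scalar_prod_def power2_eq_square lessThan_atLeast0
        ac_simps)
  finally show ?thesis unfolding y_def .
qed

lemma gram_unit_eigenvector:
  assumes i: "i < k"
  defines "x \<equiv> P *\<^sub>v unit_vec k i"
  shows "x \<in> carrier_vec k" and "x \<bullet> x = 1" and "(Z *\<^sub>v x) \<bullet> (Z *\<^sub>v x) = d i"
    and "transpose_mat Z *\<^sub>v (Z *\<^sub>v x) = d i \<cdot>\<^sub>v x"
proof -
  note P' = orth_matD[OF P]
  have Px: "transpose_mat P *\<^sub>v x = unit_vec k i"
    unfolding x_def by (rule orth_mat_transpose_unit_vec[OF P])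
  show x: "x \<in> carrier_vec k" unfolding x_def using P'(1) by simp
  show "x \<bullet> x = 1" using orth_mat_transpose_isometry[OF P x] i unfolding Px by simp
  have "(Z *\<^sub>v x) \<bullet> (Z *\<^sub>v x) = (\<Sum>j<k. d j * (unit_vec k i $ j)\<^sup>2)"
    using gram_quadratic_form[OF x] unfolding Px .
  also have "\<dots> = (\<Sum>j<k. if j = i then d j else 0)"
    by (rule sum.cong) (auto simp: unit_vec_def)
  also have "\<dots> = d i" using i by simp
  finally show "(Z *\<^sub>v x) \<bullet> (Z *\<^sub>v x) = d i" .
  have "transpose_mat Z *\<^sub>v (Z *\<^sub>v x) = (P * mat_diag k d * transpose_mat P) *\<^sub>v x"
    unfolding gram[symmetric] using Z x by (simp add: assoc_mult_mat_vec[of _ k p _ k])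
  also have "\<dots> = P *\<^sub>v (mat_diag k d *\<^sub>v (transpose_mat P *\<^sub>v x))"
    using P'(1) x by (simp add: assoc_mult_mat_vec[of _ k k _ k] mult_carrier_mat[of _ k k])
  also have "\<dots> = d i \<cdot>\<^sub>v x"
    unfolding Px mat_diag_mult_unit_vec[OF i] using P'(1) by (simp add: x_def mult_mat_vec)
  finally show "transpose_mat Z *\<^sub>v (Z *\<^sub>v x) = d i \<cdot>\<^sub>v x" .
qed

lemma gram_eigenvalue_nonneg: "i < k \<Longrightarrow> 0 \<le> d i"
  using gram_unit_eigenvector(3) scalar_prod_self_nonneg by metis

lemma gram_norm_bound:
  assumes x: "x \<in> carrier_vec k" and k: "0 < k"
  shows "(Z *\<^sub>v x) \<bullet> (Z *\<^sub>v x) \<le> Max (d ` {..<k}) * (x \<bullet> x)"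
proof -
  define y where "y = transpose_mat P *\<^sub>v x"
  have y: "y \<in> carrier_vec k" unfolding y_def using orth_matD(1)[OF P] x by simp
  have "(Z *\<^sub>v x) \<bullet> (Z *\<^sub>v x) = (\<Sum>i<k. d i * (y $ i)\<^sup>2)"
    unfolding y_def by (rule gram_quadratic_form[OF x])
  also have "\<dots> \<le> (\<Sum>i<k. Max (d ` {..<k}) * (y $ i)\<^sup>2)"
    by (intro sum_mono mult_right_mono) auto
  also have "\<dots> = Max (d ` {..<k}) * (y \<bullet> y)"
    using y by (simp add: scalar_prod_def sum_distrib_left power2_eq_square lessThan_atLeast0)
  also have "y \<bullet> y = x \<bullet> x" unfolding y_def by (rule orth_mat_transpose_isometry[OF P x])
  finally show ?thesis .
qed

lemma spec_norm_gram:
  assumes k: "0 < k"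
  shows "spec_norm Z = sqrt (Max (d ` {..<k}))"
proof -
  obtain i where i: "i < k" "d i = Max (d ` {..<k})"
    using Max_image_attained[OF k] by metis
  define X where "X = {vnorm (Z *\<^sub>v x) | x. x \<in> carrier_vec (dim_col Z) \<and> vnorm x = 1}"
  define x where "x = P *\<^sub>v unit_vec k i"
  note x = gram_unit_eigenvector[OF i(1), folded x_def]
  have "vnorm (Z *\<^sub>v x) = sqrt (Max (d ` {..<k}))" "vnorm x = 1"
    unfolding vnorm_def x(2,3) i(2) by simp_all
  moreover have "x \<in> carrier_vec (dim_col Z)" using x(1) Z by simp
  ultimately have "sqrt (Max (d ` {..<k})) \<in> X"
    unfolding X_def by force
  moreover have "y \<le> sqrt (Max (d ` {..<k}))" if "y \<in> X" for y
  proof -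
    obtain x where x: "x \<in> carrier_vec k" "vnorm x = 1" and y: "y = vnorm (Z *\<^sub>v x)"
      using \<open>y \<in> X\<close> Z unfolding X_def by auto
    have "x \<bullet> x = 1" using x(2) unfolding vnorm_def by simp
    then show ?thesis unfolding y vnorm_def using gram_norm_bound[OF x(1) k] by simp
  qed
  ultimately show ?thesis
    unfolding spec_norm_def X_def[symmetric] by (rule cSup_eq_maximum)
qed

end

lemma gram_diagonalization:
  fixes Z :: "real mat"
  assumes Z: "Z \<in> carrier_mat p k"
  obtains P d where "orth_mat P k" "transpose_mat Z * Z = P * mat_diag k d * transpose_mat P"
proof -
  have "transpose_mat (transpose_mat Z * Z) = transpose_mat Z * Z"
    using Z by (simp add: transpose_mult[of _ k p _ k])
  with Z show ?thesis using real_symmetric_spectral[of "transpose_mat Z * Z" k] that by auto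
qed

lemma spec_norm_nonneg_bound:
  fixes Z :: "real mat"
  assumes Z: "Z \<in> carrier_mat p k" and k: "0 < k"
  shows "0 \<le> spec_norm Z"
    and "x \<in> carrier_vec k \<Longrightarrow> (Z *\<^sub>v x) \<bullet> (Z *\<^sub>v x) \<le> (spec_norm Z)\<^sup>2 * (x \<bullet> x)"
proof -
  obtain P d where P: "orth_mat P k" and gram: "transpose_mat Z * Z = P * mat_diag k d * transpose_mat P"
    using gram_diagonalization[OF Z] by blast
  obtain i where "i < k" "d i = Max (d ` {..<k})" using Max_image_attained[OF k] by metis
  then have "0 \<le> Max (d ` {..<k})" using gram_eigenvalue_nonneg[OF Z P gram] by metis
  then show "0 \<le> spec_norm Z" and "x \<in> carrier_vec k \<Longrightarrow> (Z *\<^sub>v x) \<bullet> (Z *\<^sub>v x) \<le> (spec_norm Z)\<^sup>2 * (x \<bullet> x)"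
    using spec_norm_gram[OF Z P gram k] gram_norm_bound[OF Z P gram _ k] by auto
qed

text \<open>For a unit eigenvector \<open>x\<close> of \<open>Z\<^sup>T Z\<close> with the largest eigenvalue \<open>\<mu>\<close>, the vector
  \<open>y = Z x\<close> satisfies \<open>\<bar>y\<bar>\<^sup>2 = \<mu>\<close> and \<open>\<bar>Z\<^sup>T y\<bar>\<^sup>2 = \<mu>\<^sup>2\<close>.\<close>
lemma spec_norm_le_transpose:
  fixes Z :: "real mat"
  assumes Z: "Z \<in> carrier_mat p k" and p: "0 < p" and k: "0 < k"
  shows "spec_norm Z \<le> spec_norm (transpose_mat Z)"
proof -
  obtain P d where P: "orth_mat P k" and gram: "transpose_mat Z * Z = P * mat_diag k d * transpose_mat P"
    using gram_diagonalization[OF Z] by blast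
  obtain i where i: "i < k" and max: "d i = Max (d ` {..<k})"
    using Max_image_attained[OF k] by metis
  note x = gram_unit_eigenvector[OF Z P gram i]
  define y where "y = Z *\<^sub>v (P *\<^sub>v unit_vec k i)"
  have y: "y \<in> carrier_vec p" "y \<bullet> y = d i" using x(1,3) Z unfolding y_def by auto
  have "(transpose_mat Z *\<^sub>v y) \<bullet> (transpose_mat Z *\<^sub>v y) = d i * d i"
    unfolding y_def x(4) using x(1,2) by simp
  moreover have "(transpose_mat Z *\<^sub>v y) \<bullet> (transpose_mat Z *\<^sub>v y)
      \<le> (spec_norm (transpose_mat Z))\<^sup>2 * (y \<bullet> y)"
    using spec_norm_nonneg_bound(2)[of "transpose_mat Z" k p y] Z p y(1) by simp
  ultimately have "d i * d i \<le> (spec_norm (transpose_mat Z))\<^sup>2 * d i" using y(2) by simp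
  then have "d i \<le> (spec_norm (transpose_mat Z))\<^sup>2"
    using gram_eigenvalue_nonneg[OF Z P gram i] by (cases "d i = 0") auto
  then have "sqrt (d i) \<le> spec_norm (transpose_mat Z)"
    using spec_norm_nonneg_bound(1)[of "transpose_mat Z" k p] Z p by (simp add: real_le_lsqrt)
  then show ?thesis using spec_norm_gram[OF Z P gram k] max by simp
qed

lemma spec_norm_transpose:
  fixes Z :: "real mat"
  assumes "Z \<in> carrier_mat p k" and "0 < p" and "0 < k"
  shows "spec_norm (transpose_mat Z) = spec_norm Z"
  using spec_norm_le_transpose[OF assms] spec_norm_le_transpose[of "transpose_mat Z" k p] assms
  by simp

section \<open>Singular value decompositions\<close>

lemma gram_mat_diag_nonneg:
  fixes N :: "real mat"
  assumes N: "N \<in> carrier_mat p r" and NN: "transpose_mat N * N = mat_diag r d" and i: "i < r"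
  shows "0 \<le> d i"
  using arg_cong[OF NN, of "\<lambda>X. X $$ (i,i)"] N i scalar_prod_self_nonneg[of "col N i"]
  by (simp add: mat_diag_def)

lemma sorted_nonneg_split:
  fixes d :: "nat \<Rightarrow> real"
  assumes sorted: "\<forall>i j. i \<le> j \<longrightarrow> j < r \<longrightarrow> d j \<le> d i" and nonneg: "\<And>i. i < r \<Longrightarrow> 0 \<le> d i"
  obtains k where "k \<le> r" "\<And>i. i < k \<Longrightarrow> 0 < d i" "\<And>i. k \<le> i \<Longrightarrow> i < r \<Longrightarrow> d i = 0"
proof
  define k where "k = (LEAST i. r \<le> i \<or> d i \<le> 0)"
  show "k \<le> r" unfolding k_def by (rule Least_le) simp
  show "0 < d i" if "i < k" for i
    using not_less_Least[OF that[unfolded k_def]] by auto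
  show "d i = 0" if "k \<le> i" "i < r" for i
  proof -
    have "r \<le> k \<or> d k \<le> 0" unfolding k_def by (rule LeastI[of _ r]) simp
    then have "d k \<le> 0" using that by auto
    moreover have "d i \<le> d k" using sorted that by auto
    ultimately show ?thesis using nonneg[OF that(2)] by simp
  qed
qed

lemma orthonormal_normalized:
  fixes c :: "nat \<Rightarrow> real vec"
  assumes c: "\<And>i. c i \<in> carrier_vec n"
    and c_dot: "\<And>i j. i < k \<Longrightarrow> j < k \<Longrightarrow> c i \<bullet> c j = (if i = j then d i else 0)"
    and pos: "\<And>i. i < k \<Longrightarrow> 0 < d i"
  shows "orthonormal (map (\<lambda>i. (1 / sqrt (d i)) \<cdot>\<^sub>v c i) [0..<k])"
  unfolding orthonormal_def
proof (intro allI impI)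
  let ?ps = "map (\<lambda>i. (1 / sqrt (d i)) \<cdot>\<^sub>v c i) [0..<k]"
  fix i j assume "i < length ?ps" "j < length ?ps"
  then have i: "i < k" and j: "j < k" by auto
  then show "?ps ! i \<bullet> ?ps ! j = (if i = j then 1 else 0)"
    using c[of i] c[of j] c_dot[OF i j] pos[OF i] by (auto simp: real_sqrt_mult[symmetric])
qed

lemma orthogonal_columns_factor:
  fixes N :: "real mat"
  assumes N: "N \<in> carrier_mat r r" and NN: "transpose_mat N * N = mat_diag r d"
    and sorted: "\<forall>i j. i \<le> j \<longrightarrow> j < r \<longrightarrow> d j \<le> d i"
  obtains P where "orth_mat P r" "N = P * mat_diag r (\<lambda>i. sqrt (d i))"
proof -
  define c where "c = col N"
  have c: "c i \<in> carrier_vec r" for i unfolding c_def using N by auto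
  have c_dot: "c i \<bullet> c j = (if i = j then d i else 0)" if "i < r" "j < r" for i j
    using arg_cong[OF NN, of "\<lambda>X. X $$ (i,j)"] that N by (simp add: c_def mat_diag_def)
  obtain k where kr: "k \<le> r" and d_pos: "\<And>i. i < k \<Longrightarrow> 0 < d i"
    and d_zero: "\<And>i. k \<le> i \<Longrightarrow> i < r \<Longrightarrow> d i = 0"
    using sorted_nonneg_split[OF sorted gram_mat_diag_nonneg[OF N NN]] by blast
  have c_zero: "c i = 0\<^sub>v r" if "k \<le> i" "i < r" for i
    using c_dot[of i i] d_zero[OF that] that c[of i] scalar_prod_self_pos[of "c i" r] by fastforce
  define ps where "ps = map (\<lambda>i. (1 / sqrt (d i)) \<cdot>\<^sub>v c i) [0..<k]"
  have "orthonormal ps" unfolding ps_def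
    by (rule orthonormal_normalized[OF c _ d_pos]) (use c_dot kr in auto)
  moreover have "set ps \<subseteq> carrier_vec r" "length ps \<le> r" unfolding ps_def using c kr by auto
  ultimately obtain ws where ws: "set ws \<subseteq> carrier_vec r" "orthonormal ws" "length ws = r"
    "take (length ps) ws = ps"
    using orthonormal_complete by blast
  have ws_i: "ws ! i = (1 / sqrt (d i)) \<cdot>\<^sub>v c i" if "i < k" for i
    using arg_cong[OF ws(4), of "\<lambda>xs. xs ! i"] that by (simp add: ps_def)
  define P where "P = mat_of_cols r ws"
  have oP: "orth_mat P r" unfolding P_def by (rule orth_mat_of_cols[OF ws(1-3)])
  have "N = P * mat_diag r (\<lambda>i. sqrt (d i))"
  proof (rule eq_matI)
    fix i j assume "i < dim_row (P * mat_diag r (\<lambda>i. sqrt (d i)))"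
      "j < dim_col (P * mat_diag r (\<lambda>i. sqrt (d i)))"
    then have i: "i < r" and j: "j < r" using orth_matD(1)[OF oP] by (auto simp: mat_diag_def)
    have "(P * mat_diag r (\<lambda>i. sqrt (d i))) $$ (i,j) = P $$ (i,j) * sqrt (d j)"
      using orth_matD(1)[OF oP] i j by (simp add: mat_diag_mult_right)
    also have "P $$ (i,j) = ws ! j $ i" unfolding P_def using ws(3) i j by (simp add: mat_of_cols_index)
    also have "ws ! j $ i * sqrt (d j) = c j $ i"
      using ws_i[of j] c[of j] d_pos[of j] c_zero[of j] d_zero[of j] i j by (cases "j < k") auto
    also have "c j $ i = N $$ (i,j)" unfolding c_def using N i j by simp
    finally show "N $$ (i,j) = (P * mat_diag r (\<lambda>i. sqrt (d i))) $$ (i,j)" ..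
  qed (use N orth_matD(1)[OF oP] in \<open>auto simp: mat_diag_def\<close>)
  with oP that show ?thesis by blast
qed

lemma full_svd_square_exists:
  fixes M :: "real mat"
  assumes M: "M \<in> carrier_mat r r"
  shows "\<exists>P S Q. is_full_svd M P S Q"
proof -
  have "transpose_mat (transpose_mat M * M) = transpose_mat M * M"
    using M by (simp add: transpose_mult[of _ r r _ r])
  then obtain Q d where Q: "orth_mat Q r" and MM: "transpose_mat M * M = Q * mat_diag r d * transpose_mat Q"
    and sorted: "\<forall>i j. i \<le> j \<longrightarrow> j < r \<longrightarrow> d j \<le> d i"
    using real_symmetric_spectral[of "transpose_mat M * M" r] M by auto
  note Q' = orth_matD[OF Q]
  have MQ: "M * Q \<in> carrier_mat r r" using M Q'(1) by simp
  have "transpose_mat (M * Q) * (M * Q) = transpose_mat Q * (transpose_mat M * M) * Q"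
    using M Q'(1) by (simp add: transpose_mult[of _ r r _ r] assoc_mult_mat[of _ r r _ r _ r])
  also have "\<dots> = (transpose_mat Q * Q) * mat_diag r d * (transpose_mat Q * Q)"
    unfolding MM using Q'(1) by (simp add: assoc_mult_mat[of _ r r _ r _ r] mult_carrier_mat[of _ r r])
  also have "\<dots> = mat_diag r d"
    using Q'(2) by (simp add: left_mult_one_mat[OF mat_diag_dim] right_mult_one_mat[OF mat_diag_dim])
  finally have MQ_gram: "transpose_mat (M * Q) * (M * Q) = mat_diag r d" .
  then obtain P where P: "orth_mat P r" and MQ_eq: "M * Q = P * mat_diag r (\<lambda>i. sqrt (d i))"
    using orthogonal_columns_factor[OF MQ _ sorted] by blast
  have "M = M * Q * transpose_mat Q" using M Q' by simp
  then have M_eq: "M = P * mat_diag r (\<lambda>i. sqrt (d i)) * transpose_mat Q" unfolding MQ_eq .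
  have d_nonneg: "0 \<le> d i" if "i < r" for i
    using gram_mat_diag_nonneg[OF MQ MQ_gram that] .
  have dims: "dim_row M = r" "dim_col M = r" using M by auto
  have "is_full_svd M P (mat_diag r (\<lambda>i. sqrt (d i))) Q"
    unfolding is_full_svd_def dims using P Q sorted M_eq d_nonneg by (auto simp: mat_diag_def)
  then show ?thesis by blast
qed

lemma is_full_svdD:
  assumes "is_full_svd A U S V" and "A \<in> carrier_mat n m"
  shows "orth_mat U n" "orth_mat V m" "S \<in> carrier_mat n m" "diagonal_mat S"
    "A = U * S * transpose_mat V"
  using assms unfolding is_full_svd_def diagonal_mat_def by auto

lemma full_svd_sval_nonneg: "is_full_svd A U S V \<Longrightarrow> 0 \<le> sval S i"
  unfolding is_full_svd_def sval_def by auto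

lemma full_svd_sval_antimono:
  assumes svd: "is_full_svd A U S V" and ij: "i \<le> j"
  shows "sval S j \<le> sval S i"
  using assms full_svd_sval_nonneg[OF svd, of i] unfolding is_full_svd_def sval_def by auto

text \<open>\<open>singular_values\<close> picks a diagonal factor by \<open>SOME\<close>; for square matrices a full SVD
  exists, so the choice is a genuine one.\<close>
lemma singular_values_square:
  assumes "M \<in> carrier_mat r r"
  obtains A S B where "is_full_svd M A S B" "singular_values M = sval S"
proof -
  have "\<exists>S A B. is_full_svd M A S B" using full_svd_square_exists[OF assms] by blast
  then have "\<exists>A B. is_full_svd M A (SOME S. \<exists>A B. is_full_svd M A S B) B" by (rule someI_ex)
  with that show ?thesis unfolding singular_values_def[abs_def] by blast
qed

lemma sval_transpose: "sval (transpose_mat S) i = sval S i"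
  unfolding sval_def by (auto simp: min.commute)

lemma diagonal_mat_transpose: "diagonal_mat S \<Longrightarrow> diagonal_mat (transpose_mat S)"
  unfolding diagonal_mat_def by auto

lemma is_full_svd_transpose:
  assumes "is_full_svd A U S V"
  shows "is_full_svd (transpose_mat A) V (transpose_mat S) U"
proof -
  have A: "A \<in> carrier_mat (dim_row A) (dim_col A)" by auto
  note facts = is_full_svdD[OF assms A]
  have "transpose_mat A = V * transpose_mat S * transpose_mat U"
    unfolding facts(5) using orth_matD(1)[OF facts(1)] orth_matD(1)[OF facts(2)] facts(3)
    by (simp add: transpose_mult[of _ "dim_row A" "dim_col A" _ "dim_col A"]
        transpose_mult[of _ "dim_row A" "dim_row A" _ "dim_col A"]
        assoc_mult_mat[of _ "dim_col A" "dim_col A" _ "dim_row A" _ "dim_row A"])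
  then show ?thesis using assms unfolding is_full_svd_def by (auto simp: min.commute)
qed

lemma diagonal_mat_transpose_mult_self:
  assumes S: "S \<in> carrier_mat a b" and diag: "diagonal_mat S"
  shows "transpose_mat S * S = mat_diag b (\<lambda>i. (sval S i)\<^sup>2)"
proof (rule eq_matI)
  fix i j assume "i < dim_row (mat_diag b (\<lambda>i. (sval S i)\<^sup>2))" "j < dim_col (mat_diag b (\<lambda>i. (sval S i)\<^sup>2))"
  then have i: "i < b" and j: "j < b" by (auto simp: mat_diag_def)
  have "(transpose_mat S * S) $$ (i,j) = (\<Sum>l\<in>{0..<a}. S $$ (l,i) * S $$ (l,j))"
    using S i j by (simp add: scalar_prod_def)
  also have "\<dots> = (\<Sum>l\<in>{0..<a}. if l = i then (if i = j then (S $$ (i,i))\<^sup>2 else 0) else 0)"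
    by (rule sum.cong) (use diag S i j in \<open>auto simp: diagonal_mat_def power2_eq_square\<close>)
  also have "\<dots> = mat_diag b (\<lambda>i. (sval S i)\<^sup>2) $$ (i,j)"
    using S i j by (auto simp: sum.delta mat_diag_def sval_def)
  finally show "(transpose_mat S * S) $$ (i,j) = mat_diag b (\<lambda>i. (sval S i)\<^sup>2) $$ (i,j)" .
qed (use S in \<open>auto simp: mat_diag_def\<close>)

lemma diagonal_mat_mult_transpose_self:
  assumes S: "S \<in> carrier_mat a b" and diag: "diagonal_mat S"
  shows "S * transpose_mat S = mat_diag a (\<lambda>i. (sval S i)\<^sup>2)"
  using diagonal_mat_transpose_mult_self[of "transpose_mat S" b a] S diagonal_mat_transpose[OF diag]
  by (simp add: sval_transpose)

section \<open>Column blocks and canonical angles\<close>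

lemma blk_carrier: "blk M r0 c0 k l \<in> carrier_mat k l"
  by (simp add: blk_def)

definition sel_mat :: "nat \<Rightarrow> nat \<Rightarrow> nat \<Rightarrow> real mat" where
  "sel_mat d c k = mat d k (\<lambda>(i,j). if i = j + c then 1 else 0)"

lemma sel_mat_carrier[simp]: "sel_mat d c k \<in> carrier_mat d k"
  and dim_sel_mat[simp]: "dim_row (sel_mat d c k) = d" "dim_col (sel_mat d c k) = k"
  unfolding sel_mat_def by simp_all

lemma mult_sel_mat:
  assumes M: "M \<in> carrier_mat a b" and ck: "c + k \<le> b"
  shows "M * sel_mat b c k = blk M 0 c a k"
  using assms
  by (intro eq_matI)
    (auto simp: blk_def sel_mat_def scalar_prod_def if_distrib[of "(*) _"] sum.delta cong: if_cong)

lemma sel_mat_transpose_mult: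
  assumes M: "M \<in> carrier_mat a b" and ck: "c + k \<le> a"
  shows "transpose_mat (sel_mat a c k) * M = blk M c 0 k b"
  using assms
  by (intro eq_matI)
    (auto simp: blk_def sel_mat_def scalar_prod_def if_distrib[of "\<lambda>x. x * _"] sum.delta
      cong: if_cong)

lemma sel_mat_orthonormal:
  assumes "c + k \<le> d"
  shows "transpose_mat (sel_mat d c k) * sel_mat d c k = 1\<^sub>m k"
  unfolding sel_mat_transpose_mult[OF sel_mat_carrier assms]
  using assms by (auto simp: blk_def sel_mat_def intro!: eq_matI)

lemma sel_mat_mult_transpose:
  "sel_mat d c k * transpose_mat (sel_mat d c k) = mat_diag d (\<lambda>i. if c \<le> i \<and> i < c + k then 1 else 0)"
proof (rule eq_matI)
  fix i j assume "i < dim_row (mat_diag d (\<lambda>i. if c \<le> i \<and> i < c + k then 1 else 0) :: real mat)"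
    "j < dim_col (mat_diag d (\<lambda>i. if c \<le> i \<and> i < c + k then 1 else 0) :: real mat)"
  then have i: "i < d" and j: "j < d" by (auto simp: mat_diag_def)
  have "(sel_mat d c k * transpose_mat (sel_mat d c k)) $$ (i,j)
      = (\<Sum>l\<in>{0..<k}. (if i = l + c then 1 else 0) * (if j = l + c then 1 else 0))"
    using i j by (simp add: scalar_prod_def sel_mat_def)
  also have "\<dots> = (\<Sum>l\<in>{0..<k}. if l = i - c then (if c \<le> i \<and> i = j then 1 else 0) else 0)"
    by (rule sum.cong) auto
  finally show "(sel_mat d c k * transpose_mat (sel_mat d c k)) $$ (i,j)
      = mat_diag d (\<lambda>i. if c \<le> i \<and> i < c + k then 1 else 0) $$ (i,j)"
    using i j by (auto simp: mat_diag_def sum.delta)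
qed (auto simp: mat_diag_def)

lemma sel_mat_complement:
  assumes "r \<le> d"
  shows "sel_mat d 0 r * transpose_mat (sel_mat d 0 r)
    + sel_mat d r (d - r) * transpose_mat (sel_mat d r (d - r)) = 1\<^sub>m d"
  unfolding sel_mat_mult_transpose using assms
  by (auto simp: mat_diag_def intro!: eq_matI)

lemma diagonal_mult_sel_mat:
  assumes S: "S \<in> carrier_mat n m" and diag: "diagonal_mat S"
    and ck: "c + k \<le> n" and cl: "c + l \<le> m" and shape: "c + k = n \<or> l \<le> k"
  shows "S * sel_mat m c l = sel_mat n c k * blk S c c k l"
proof (rule eq_matI)
  fix i j assume "i < dim_row (sel_mat n c k * blk S c c k l)" "j < dim_col (sel_mat n c k * blk S c c k l)"
  then have i: "i < n" and j: "j < l" by (auto simp: blk_def sel_mat_def)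
  have "(S * sel_mat m c l) $$ (i,j) = S $$ (i, j + c)"
    using mult_sel_mat[OF S cl] i j by (simp add: blk_def)
  also have "\<dots> = (if c \<le> i \<and> i < c + k then S $$ (i, j + c) else 0)"
    using diag S i j cl shape unfolding diagonal_mat_def by auto
  also have "\<dots> = (\<Sum>q\<in>{0..<k}. if q = i - c then (if c \<le> i then S $$ (i, j + c) else 0) else 0)"
    using i j by (auto simp: sum.delta)
  also have "\<dots> = (\<Sum>q\<in>{0..<k}. (if i = q + c then 1 else 0) * S $$ (q + c, j + c))"
    by (rule sum.cong) auto
  also have "\<dots> = (sel_mat n c k * blk S c c k l) $$ (i,j)"
    using i j by (simp add: scalar_prod_def sel_mat_def blk_def)
  finally show "(S * sel_mat m c l) $$ (i,j) = (sel_mat n c k * blk S c c k l) $$ (i,j)" .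
qed (use S in \<open>auto simp: blk_def\<close>)

lemma mult_transpose_mult:
  fixes R J :: "real mat"
  assumes R: "R \<in> carrier_mat d e" and J: "J \<in> carrier_mat e k"
  shows "(R * J) * transpose_mat (R * J) = R * (J * transpose_mat J) * transpose_mat R"
  using R J by (simp add: transpose_mult[OF R J] assoc_mult_mat[of _ d e _ k _ d]
      assoc_mult_mat[of _ e k _ k _ d] assoc_mult_mat[of _ d e _ e _ d])

lemma transpose_mat_diag: "transpose_mat (mat_diag n f) = mat_diag n f"
  by (auto simp: mat_diag_def intro!: eq_matI)

lemma orth_mat_col_blocks:
  fixes P :: "real mat"
  assumes P: "orth_mat P d" and r: "r \<le> d"
  shows "transpose_mat (blk P 0 0 d r) * blk P 0 0 d r = 1\<^sub>m r"
    and "blk P 0 0 d r * transpose_mat (blk P 0 0 d r)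
       + blk P 0 r d (d - r) * transpose_mat (blk P 0 r d (d - r)) = 1\<^sub>m d"
proof -
  note P' = orth_matD[OF P]
  define E1 E2 where "E1 = sel_mat d 0 r" and "E2 = sel_mat d r (d - r)"
  have E: "E1 \<in> carrier_mat d r" "E2 \<in> carrier_mat d (d - r)" unfolding E1_def E2_def by auto
  have P1: "blk P 0 0 d r = P * E1" and P2: "blk P 0 r d (d - r) = P * E2"
    unfolding E1_def E2_def using mult_sel_mat[OF P'(1)] r by auto
  have "transpose_mat (P * E1) * (P * E1) = transpose_mat E1 * (transpose_mat P * P) * E1"
    using P'(1) E by (simp add: transpose_mult[of _ d d _ r] assoc_mult_mat[of _ r d _ d _ r])
  then show "transpose_mat (blk P 0 0 d r) * blk P 0 0 d r = 1\<^sub>m r"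
    unfolding P1 using P'(2) E r sel_mat_orthonormal[of 0 r d] by (simp add: E1_def)
  have "P * E1 * transpose_mat (P * E1) + P * E2 * transpose_mat (P * E2)
      = P * (E1 * transpose_mat E1 + E2 * transpose_mat E2) * transpose_mat P"
  proof -
    have EE: "E1 * transpose_mat E1 \<in> carrier_mat d d" "E2 * transpose_mat E2 \<in> carrier_mat d d"
      using E by auto
    show ?thesis
      unfolding mult_transpose_mult[OF P'(1) E(1)] mult_transpose_mult[OF P'(1) E(2)]
        mult_add_distrib_mat[OF P'(1) EE]
      using P'(1) EE by (simp add: add_mult_distrib_mat[of _ d d])
  qed
  also have "\<dots> = 1\<^sub>m d"
    unfolding E1_def E2_def sel_mat_complement[OF r] using P' by simp
  finally show "blk P 0 0 d r * transpose_mat (blk P 0 0 d r)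
       + blk P 0 r d (d - r) * transpose_mat (blk P 0 r d (d - r)) = 1\<^sub>m d"
    unfolding P1 P2 .
qed

lemma gram_transpose_mult:
  fixes X Y :: "real mat"
  assumes X: "X \<in> carrier_mat d a" and Y: "Y \<in> carrier_mat d b"
  shows "transpose_mat (transpose_mat X * Y) * (transpose_mat X * Y)
    = transpose_mat Y * (X * transpose_mat X) * Y"
  using X Y by (simp add: transpose_mult[of _ a d _ b] assoc_mult_mat[of _ b d _ a _ b]
      assoc_mult_mat[of _ b d _ d _ b] assoc_mult_mat[of _ d a _ d _ b])

lemma gram_cross_block:
  fixes P1 P2 Q1 :: "real mat"
  assumes P1: "P1 \<in> carrier_mat d r" and P2: "P2 \<in> carrier_mat d s" and Q1: "Q1 \<in> carrier_mat d r"
    and P_sum: "P1 * transpose_mat P1 + P2 * transpose_mat P2 = 1\<^sub>m d"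
    and Q1_orth: "transpose_mat Q1 * Q1 = 1\<^sub>m r"
  shows "transpose_mat (transpose_mat P2 * Q1) * (transpose_mat P2 * Q1)
    = 1\<^sub>m r - transpose_mat (transpose_mat P1 * Q1) * (transpose_mat P1 * Q1)"
proof -
  let ?G1 = "transpose_mat (transpose_mat P1 * Q1) * (transpose_mat P1 * Q1)"
  let ?G2 = "transpose_mat (transpose_mat P2 * Q1) * (transpose_mat P2 * Q1)"
  have PP: "P1 * transpose_mat P1 \<in> carrier_mat d d" "P2 * transpose_mat P2 \<in> carrier_mat d d"
    using P1 P2 by auto
  have "?G1 + ?G2 = transpose_mat Q1 * (P1 * transpose_mat P1 + P2 * transpose_mat P2) * Q1"
    unfolding gram_transpose_mult[OF P1 Q1] gram_transpose_mult[OF P2 Q1]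
      mult_add_distrib_mat[OF transpose_carrier_mat[THEN iffD2, OF Q1] PP]
    using Q1 PP by (simp add: add_mult_distrib_mat[of _ r d])
  also have "\<dots> = 1\<^sub>m r" unfolding P_sum using Q1 Q1_orth by simp
  finally have sum: "?G1 + ?G2 = 1\<^sub>m r" .
  have "?G1 \<in> carrier_mat r r" "?G2 \<in> carrier_mat r r" using P1 P2 Q1 by auto
  with sum show ?thesis by (intro eq_matI) (auto simp flip: sum)
qed

lemma orth_conj_one_minus_mat_diag:
  assumes B: "orth_mat B r"
  shows "1\<^sub>m r - B * mat_diag r g * transpose_mat B = B * mat_diag r (\<lambda>i. 1 - g i) * transpose_mat B"
proof -
  note B' = orth_matD[OF B]
  have "mat_diag r (\<lambda>i. 1 - g i) = 1\<^sub>m r - mat_diag r g"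
    by (auto simp: mat_diag_def intro!: eq_matI)
  then have "B * mat_diag r (\<lambda>i. 1 - g i) * transpose_mat B
      = (B * 1\<^sub>m r - B * mat_diag r g) * transpose_mat B"
    using B'(1) by (simp add: mult_minus_distrib_mat[of B r r _ r])
  also have "\<dots> = B * transpose_mat B - B * mat_diag r g * transpose_mat B"
    using B'(1) by (simp add: minus_mult_distrib_mat[of _ r r _ _ r] mult_carrier_mat[of _ r r])
  finally show ?thesis using B'(3) by simp
qed

lemma full_svd_square_gram:
  assumes svd: "is_full_svd M A S B" and M: "M \<in> carrier_mat r r"
  shows "transpose_mat M * M = B * mat_diag r (\<lambda>i. (sval S i)\<^sup>2) * transpose_mat B"
    and "M * transpose_mat M = A * mat_diag r (\<lambda>i. (sval S i)\<^sup>2) * transpose_mat A"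
proof -
  note facts = is_full_svdD[OF svd M]
  note A' = orth_matD[OF facts(1)] and B' = orth_matD[OF facts(2)]
  have TM: "transpose_mat M = B * transpose_mat S * transpose_mat A"
    unfolding facts(5) using A'(1) B'(1) facts(3)
    by (simp add: transpose_mult[of _ r r _ r] assoc_mult_mat[of _ r r _ r _ r] mult_carrier_mat[of _ r r])
  have "transpose_mat M * M = B * transpose_mat S * (transpose_mat A * A) * S * transpose_mat B"
    unfolding TM unfolding facts(5) using A'(1) B'(1) facts(3)
    by (simp add: assoc_mult_mat[of _ r r _ r _ r] mult_carrier_mat[of _ r r])
  also have "\<dots> = B * (transpose_mat S * S) * transpose_mat B"
    unfolding A'(2) using A'(1) B'(1) facts(3)
    by (simp add: assoc_mult_mat[of _ r r _ r _ r] mult_carrier_mat[of _ r r])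
  finally show "transpose_mat M * M = B * mat_diag r (\<lambda>i. (sval S i)\<^sup>2) * transpose_mat B"
    unfolding diagonal_mat_transpose_mult_self[OF facts(3,4)] .
  have "M * transpose_mat M = A * S * (transpose_mat B * B) * transpose_mat S * transpose_mat A"
    unfolding TM unfolding facts(5) using A'(1) B'(1) facts(3)
    by (simp add: assoc_mult_mat[of _ r r _ r _ r] mult_carrier_mat[of _ r r])
  also have "\<dots> = A * (S * transpose_mat S) * transpose_mat A"
    unfolding B'(2) using A'(1) B'(1) facts(3)
    by (simp add: assoc_mult_mat[of _ r r _ r _ r] mult_carrier_mat[of _ r r])
  finally show "M * transpose_mat M = A * mat_diag r (\<lambda>i. (sval S i)\<^sup>2) * transpose_mat A"
    unfolding diagonal_mat_mult_transpose_self[OF facts(3,4)] .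
qed

lemma sin_Theta_mat_diag:
  "sin_Theta X Y = mat_diag (dim_col X) (\<lambda>i. sqrt (1 - (singular_values (transpose_mat X * Y) i)\<^sup>2))"
  unfolding sin_Theta_def mat_diag_def by (auto intro!: eq_matI)

lemma gram_cross_block_svd:
  fixes P Q :: "real mat"
  assumes P: "orth_mat P d" and Q: "orth_mat Q d" and r: "r \<le> d"
    and svd: "is_full_svd (transpose_mat (blk P 0 0 d r) * blk Q 0 0 d r) A S B"
  shows "transpose_mat (transpose_mat (blk P 0 r d (d - r)) * blk Q 0 0 d r)
      * (transpose_mat (blk P 0 r d (d - r)) * blk Q 0 0 d r)
    = B * mat_diag r (\<lambda>i. 1 - (sval S i)\<^sup>2) * transpose_mat B"
proof -
  have M: "transpose_mat (blk P 0 0 d r) * blk Q 0 0 d r \<in> carrier_mat r r"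
    by (intro carrier_matI) (simp_all add: blk_def)
  show ?thesis
    unfolding gram_cross_block[OF blk_carrier blk_carrier blk_carrier orth_mat_col_blocks(2)[OF P r]
        orth_mat_col_blocks(1)[OF Q r]]
    unfolding full_svd_square_gram(1)[OF svd M] orth_conj_one_minus_mat_diag[OF is_full_svdD(2)[OF svd M]] ..
qed

lemma spec_norm_mat_diag_sqrt:
  assumes r: "0 < r" and g: "\<And>i. i < r \<Longrightarrow> 0 \<le> g i"
  shows "spec_norm (mat_diag r (\<lambda>i. sqrt (g i))) = sqrt (Max (g ` {..<r}))"
proof -
  let ?Z = "mat_diag r (\<lambda>i. sqrt (g i))"
  have "transpose_mat ?Z * ?Z = mat_diag r (\<lambda>i. sqrt (g i) * sqrt (g i))"
    by (subst transpose_mat_diag) simp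
  also have "\<dots> = mat_diag r g" using g by (auto simp: mat_diag_def intro!: eq_matI)
  finally have "transpose_mat ?Z * ?Z = 1\<^sub>m r * mat_diag r g * transpose_mat (1\<^sub>m r)"
    by (simp add: left_mult_one_mat[OF mat_diag_dim] right_mult_one_mat[OF mat_diag_dim])
  moreover have "orth_mat (1\<^sub>m r) r" unfolding orth_mat_def by simp
  ultimately show ?thesis using spec_norm_gram[OF mat_diag_dim _ _ r] by blast
qed

lemma spec_norm_sin_Theta_cross_blocks:
  fixes P Q :: "real mat"
  assumes P: "orth_mat P d" and Q: "orth_mat Q d" and r: "0 < r" "r < d"
  shows "spec_norm (sin_Theta (blk P 0 0 d r) (blk Q 0 0 d r))
      = spec_norm (transpose_mat (blk P 0 0 d r) * blk Q 0 r d (d - r))"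
    and "spec_norm (sin_Theta (blk P 0 0 d r) (blk Q 0 0 d r))
      = spec_norm (transpose_mat (blk P 0 r d (d - r)) * blk Q 0 0 d r)"
proof -
  define M where "M = transpose_mat (blk P 0 0 d r) * blk Q 0 0 d r"
  have M: "M \<in> carrier_mat r r" unfolding M_def by (intro carrier_matI) (simp_all add: blk_def)
  obtain A S B where svd: "is_full_svd M A S B" and sv: "singular_values M = sval S"
    using singular_values_square[OF M] by blast
  define g where "g = (\<lambda>i. 1 - (sval S i)\<^sup>2)"
  define Y where "Y = transpose_mat (blk P 0 r d (d - r)) * blk Q 0 0 d r"
  have Y: "Y \<in> carrier_mat (d - r) r" unfolding Y_def by (intro carrier_matI) (simp_all add: blk_def)
  have gram_Y: "transpose_mat Y * Y = B * mat_diag r g * transpose_mat B"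
    unfolding Y_def g_def by (rule gram_cross_block_svd[OF P Q _ svd[unfolded M_def]]) (use r in simp)
  define X where "X = transpose_mat (blk Q 0 r d (d - r)) * blk P 0 0 d r"
  have X: "X \<in> carrier_mat (d - r) r" unfolding X_def by (intro carrier_matI) (simp_all add: blk_def)
  have MT: "transpose_mat M = transpose_mat (blk Q 0 0 d r) * blk P 0 0 d r"
    unfolding M_def by (simp add: transpose_mult[OF transpose_carrier_mat[THEN iffD2, OF blk_carrier] blk_carrier])
  have gram_X: "transpose_mat X * X = A * mat_diag r g * transpose_mat A"
    using gram_cross_block_svd[OF Q P _ is_full_svd_transpose[OF svd, unfolded MT]] r
    unfolding X_def g_def sval_transpose by simp
  have g_nonneg: "0 \<le> g i" if "i < r" for i
    by (rule gram_eigenvalue_nonneg[OF Y is_full_svdD(2)[OF svd M] gram_Y that])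
  have "sin_Theta (blk P 0 0 d r) (blk Q 0 0 d r) = mat_diag r (\<lambda>i. sqrt (g i))"
    unfolding sin_Theta_mat_diag M_def[symmetric] sv g_def by (simp add: blk_def)
  then have "spec_norm (sin_Theta (blk P 0 0 d r) (blk Q 0 0 d r)) = sqrt (Max (g ` {..<r}))"
    using spec_norm_mat_diag_sqrt[OF r(1) g_nonneg] by simp
  moreover have "spec_norm Y = sqrt (Max (g ` {..<r}))"
    by (rule spec_norm_gram[OF Y is_full_svdD(2)[OF svd M] gram_Y r(1)])
  moreover have "spec_norm (transpose_mat X) = sqrt (Max (g ` {..<r}))"
    using spec_norm_transpose[OF X] spec_norm_gram[OF X is_full_svdD(1)[OF svd M] gram_X r(1)] r
    by simp
  moreover have "transpose_mat X = transpose_mat (blk P 0 0 d r) * blk Q 0 r d (d - r)"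
    unfolding X_def by (simp add: transpose_mult[OF transpose_carrier_mat[THEN iffD2, OF blk_carrier] blk_carrier])
  ultimately show "spec_norm (sin_Theta (blk P 0 0 d r) (blk Q 0 0 d r))
      = spec_norm (transpose_mat (blk P 0 0 d r) * blk Q 0 r d (d - r))"
    and "spec_norm (sin_Theta (blk P 0 0 d r) (blk Q 0 0 d r))
      = spec_norm (transpose_mat (blk P 0 r d (d - r)) * blk Q 0 0 d r)"
    unfolding Y_def by simp_all
qed

section \<open>Perturbation of singular subspaces\<close>

lemma transpose_blk:
  assumes "r0 + nr \<le> dim_row M" and "c0 + nc \<le> dim_col M"
  shows "transpose_mat (blk M r0 c0 nr nc) = blk (transpose_mat M) c0 r0 nc nr"
  using assms by (auto simp: blk_def intro!: eq_matI)

lemma sval_blk: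
  assumes "c + k \<le> dim_row S" and "c + l \<le> dim_col S" and "i < min k l"
  shows "sval (blk S c c k l) i = sval S (i + c)"
  using assms by (auto simp: sval_def blk_def)

lemma sval_blk_trailing:
  assumes "c \<le> dim_row S" and "c \<le> dim_col S"
  shows "sval (blk S c c (dim_row S - c) (dim_col S - c)) i = sval S (i + c)"
  using assms by (auto simp: sval_def blk_def)

definition singular_block :: "real mat \<Rightarrow> real mat \<Rightarrow> real mat \<Rightarrow> real mat \<Rightarrow> bool" where
  "singular_block A X \<Sigma> Y \<longleftrightarrow> A * Y = X * \<Sigma> \<and> transpose_mat A * X = Y * transpose_mat \<Sigma>"

lemma full_svd_singular_block:
  assumes svd: "is_full_svd A U S V" and A: "A \<in> carrier_mat n m"
    and ck: "c + k \<le> n" and cl: "c + l \<le> m"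
    and shape: "c + k = n \<or> l \<le> k" "c + l = m \<or> k \<le> l"
  shows "singular_block A (blk U 0 c n k) (blk S c c k l) (blk V 0 c m l)"
proof -
  note facts = is_full_svdD[OF svd A]
  note U' = orth_matD[OF facts(1)] and V' = orth_matD[OF facts(2)]
  define En Em where "En = sel_mat n c k" and "Em = sel_mat m c l"
  define Sb where "Sb = blk S c c k l"
  have carriers: "En \<in> carrier_mat n k" "Em \<in> carrier_mat m l" "Sb \<in> carrier_mat k l"
    unfolding En_def Em_def Sb_def by (auto simp: blk_def)
  have U1: "blk U 0 c n k = U * En" and V1: "blk V 0 c m l = V * Em"
    unfolding En_def Em_def using mult_sel_mat[OF U'(1) ck] mult_sel_mat[OF V'(1) cl] by simp_all
  have SR: "S * Em = En * Sb"
    unfolding En_def Em_def Sb_def by (rule diagonal_mult_sel_mat[OF facts(3,4) ck cl shape(1)])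
  have "transpose_mat S * En = Em * blk (transpose_mat S) c c l k"
    unfolding En_def Em_def
    by (rule diagonal_mult_sel_mat[OF _ diagonal_mat_transpose[OF facts(4)] cl ck shape(2)])
      (use facts(3) in simp)
  also have "blk (transpose_mat S) c c l k = transpose_mat Sb"
    unfolding Sb_def using facts(3) ck cl by (simp add: transpose_blk)
  finally have SL: "transpose_mat S * En = Em * transpose_mat Sb" .
  have VVE: "transpose_mat V * (V * Em) = Em"
    using V' carriers by (simp flip: assoc_mult_mat[of _ m m _ m _ l])
  have UUE: "transpose_mat U * (U * En) = En"
    using U' carriers by (simp flip: assoc_mult_mat[of _ n n _ n _ k])
  have "A * (V * Em) = U * (S * Em)"
    unfolding facts(5) using U'(1) V'(1) facts(3) carriers
    by (simp add: assoc_mult_mat[of _ n m _ m _ l] assoc_mult_mat[of _ n n _ m _ l] VVE)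
  moreover have "transpose_mat A * (U * En) = V * (transpose_mat S * En)"
    unfolding facts(5) using U'(1) V'(1) facts(3) carriers
    by (simp add: transpose_mult[of _ n m _ m] transpose_mult[of _ n n _ m]
        assoc_mult_mat[of _ m n _ n _ k] assoc_mult_mat[of _ m m _ n _ k] UUE)
  ultimately show ?thesis
    unfolding singular_block_def U1 V1 Sb_def[symmetric] SR SL
    using U'(1) V'(1) carriers by simp
qed

lemma singular_block_transpose_mult:
  assumes "singular_block A X \<Sigma> Y" "A \<in> carrier_mat n m" "X \<in> carrier_mat n a"
    "\<Sigma> \<in> carrier_mat a p" "Y \<in> carrier_mat m p"
  shows "transpose_mat X * A = \<Sigma> * transpose_mat Y"
proof -
  have "transpose_mat (transpose_mat A * X) = transpose_mat (Y * transpose_mat \<Sigma>)"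
    using assms(1) unfolding singular_block_def by simp
  then show ?thesis using assms(2-5) by (simp add: transpose_mult[of _ m n _ a] transpose_mult[of _ m p _ a])
qed

lemma mat_add_eq_diff_telescope:
  fixes K T1 T2 G1 G2 :: "'a :: ab_group_add mat"
  assumes "K + T1 = G1" and "G2 + T2 = K"
    and "K \<in> carrier_mat a b" "T1 \<in> carrier_mat a b" "T2 \<in> carrier_mat a b"
    "G1 \<in> carrier_mat a b" "G2 \<in> carrier_mat a b"
  shows "T1 + T2 = G1 - G2"
  using assms by (intro eq_matI) (auto dest!: arg_cong[of _ _ "\<lambda>M. M $$ _"])

lemma hadamard_sylvester_inverse:
  fixes X :: "real mat"
  assumes X: "X \<in> carrier_mat a b" and ne: "\<And>i j. i < a \<Longrightarrow> j < b \<Longrightarrow> g j \<noteq> h i"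
  shows "mat a b (\<lambda>(i,j). 1 / (g j - h i)) \<circ>\<^sub>H (X * mat_diag b g - mat_diag a h * X) = X"
  using X ne
  by (auto simp: hadamard_def mat_diag_mult_left[OF X] mat_diag_mult_right[OF X] field_simps
      intro!: eq_matI)

context
  fixes A E X \<Sigma> Y X' \<Sigma>' Y' :: "real mat" and n m a p b q :: nat
  assumes A: "A \<in> carrier_mat n m" and E: "E \<in> carrier_mat n m"
    and X: "X \<in> carrier_mat n a" and \<Sigma>: "\<Sigma> \<in> carrier_mat a p" and Y: "Y \<in> carrier_mat m p"
    and X': "X' \<in> carrier_mat n b" and \<Sigma>': "\<Sigma>' \<in> carrier_mat b q" and Y': "Y' \<in> carrier_mat m q"
    and blk: "singular_block A X \<Sigma> Y" and blk': "singular_block (A + E) X' \<Sigma>' Y'"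
begin

lemma singular_block_cross_left:
  "\<Sigma> * transpose_mat Y * Y' * transpose_mat \<Sigma>' + transpose_mat X * E * Y' * transpose_mat \<Sigma>'
    = (transpose_mat X * X') * (\<Sigma>' * transpose_mat \<Sigma>')"
proof -
  have AE: "A + E \<in> carrier_mat n m" using A E by simp
  have "\<Sigma> * transpose_mat Y * Y' * transpose_mat \<Sigma>' + transpose_mat X * E * Y' * transpose_mat \<Sigma>'
      = transpose_mat X * (A + E) * Y' * transpose_mat \<Sigma>'"
    unfolding singular_block_transpose_mult[OF blk A X \<Sigma> Y, symmetric] using A E X Y' \<Sigma>'
    by (simp add: mult_add_distrib_mat[of _ a n] add_mult_distrib_mat[of _ a m]
        add_mult_distrib_mat[of _ a q])
  also have "\<dots> = (transpose_mat X * X') * (\<Sigma>' * transpose_mat \<Sigma>')"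
    using blk' X X' Y' \<Sigma>' AE unfolding singular_block_def
    by (simp add: assoc_mult_mat[of _ a n _ m _ q] assoc_mult_mat[of _ a n _ q _ b]
        assoc_mult_mat[of _ n b _ q _ b] assoc_mult_mat[of _ a n _ b _ b])
  finally show ?thesis .
qed

lemma singular_block_cross_right:
  "(\<Sigma> * transpose_mat \<Sigma>) * (transpose_mat X * X') + \<Sigma> * transpose_mat Y * transpose_mat E * X'
    = \<Sigma> * transpose_mat Y * Y' * transpose_mat \<Sigma>'"
proof -
  have AE: "A + E \<in> carrier_mat n m" using A E by simp
  have YA: "transpose_mat Y * transpose_mat A = transpose_mat \<Sigma> * transpose_mat X"
    using arg_cong[OF conjunct1[OF blk[unfolded singular_block_def]], of transpose_mat] A X \<Sigma> Y
    by (simp add: transpose_mult[of _ n m _ p] transpose_mult[of _ n a _ p])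
  have "(\<Sigma> * transpose_mat \<Sigma>) * (transpose_mat X * X') + \<Sigma> * transpose_mat Y * transpose_mat E * X'
      = \<Sigma> * (transpose_mat Y * transpose_mat A) * X' + \<Sigma> * transpose_mat Y * transpose_mat E * X'"
    unfolding YA using X X' \<Sigma>
    by (simp add: assoc_mult_mat[of _ a p _ a _ b] assoc_mult_mat[of _ a a _ n _ b]
        assoc_mult_mat[of _ a p _ n _ b] assoc_mult_mat[of _ p a _ n _ b])
  also have "\<dots> = \<Sigma> * transpose_mat Y * transpose_mat (A + E) * X'"
    using A E Y X' \<Sigma>
    by (simp add: transpose_add mult_add_distrib_mat[of _ a m] add_mult_distrib_mat[of _ a n]
        assoc_mult_mat[of _ a p _ m _ n])
  also have "\<dots> = \<Sigma> * transpose_mat Y * Y' * transpose_mat \<Sigma>'"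
    using blk' X' Y' \<Sigma> \<Sigma>' Y AE unfolding singular_block_def
    by (simp add: assoc_mult_mat[of _ a p _ n _ b] assoc_mult_mat[of _ p m _ n _ b]
        assoc_mult_mat[of _ a p _ q _ b] assoc_mult_mat[of _ p m _ q _ b]
        assoc_mult_mat[of _ a p _ m _ q] assoc_mult_mat[of _ a m _ q _ b])
  finally show ?thesis .
qed

lemma singular_block_perturbation:
  "transpose_mat X * E * Y' * transpose_mat \<Sigma>' + \<Sigma> * transpose_mat Y * transpose_mat E * X'
    = (transpose_mat X * X') * (\<Sigma>' * transpose_mat \<Sigma>') - (\<Sigma> * transpose_mat \<Sigma>) * (transpose_mat X * X')"
proof -
  let ?K = "\<Sigma> * transpose_mat Y * Y' * transpose_mat \<Sigma>'"
  let ?T1 = "transpose_mat X * E * Y' * transpose_mat \<Sigma>'"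
  let ?T2 = "\<Sigma> * transpose_mat Y * transpose_mat E * X'"
  let ?G1 = "(transpose_mat X * X') * (\<Sigma>' * transpose_mat \<Sigma>')"
  let ?G2 = "(\<Sigma> * transpose_mat \<Sigma>) * (transpose_mat X * X')"
  have "?K \<in> carrier_mat a b" "?T1 \<in> carrier_mat a b" "?T2 \<in> carrier_mat a b"
    "?G1 \<in> carrier_mat a b" "?G2 \<in> carrier_mat a b"
    using X \<Sigma> Y X' \<Sigma>' Y' E by auto
  with singular_block_cross_left singular_block_cross_right show ?thesis
    by (rule mat_add_eq_diff_telescope)
qed

lemma hadamard_recovers_cross_block:
  assumes diag: "diagonal_mat \<Sigma>" and diag': "diagonal_mat \<Sigma>'"
    and gap: "\<And>i j. i < a \<Longrightarrow> j < b \<Longrightarrow> (sval \<Sigma>' j)\<^sup>2 \<noteq> (sval \<Sigma> i)\<^sup>2"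
  shows "mat a b (\<lambda>(i,j). 1 / ((sval \<Sigma>' j)\<^sup>2 - (sval \<Sigma> i)\<^sup>2)) \<circ>\<^sub>H
      (transpose_mat X * E * Y' * transpose_mat \<Sigma>' + \<Sigma> * transpose_mat Y * transpose_mat E * X')
    = transpose_mat X * X'"
  unfolding singular_block_perturbation diagonal_mat_mult_transpose_self[OF \<Sigma> diag] diagonal_mat_mult_transpose_self[OF \<Sigma>' diag']
  by (rule hadamard_sylvester_inverse) (use X X' gap in auto)

end

lemma square_neq_of_less:
  fixes x y :: real
  assumes "0 \<le> x" and "x < y"
  shows "x\<^sup>2 \<noteq> y\<^sup>2"
  using power_strict_mono[OF assms(2,1), of 2] by simp

lemma diagonal_mat_blk:
  assumes "diagonal_mat S" "c + k \<le> dim_row S" "c + l \<le> dim_col S"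
  shows "diagonal_mat (blk S c c k l)"
  using assms unfolding diagonal_mat_def blk_def by auto

lemma full_svd_blocks:
  assumes svd: "is_full_svd A U S V" and A: "A \<in> carrier_mat n m" and r: "r < n" "r < m"
  shows "singular_block A (blk U 0 0 n r) (blk S 0 0 r r) (blk V 0 0 m r)"
    and "singular_block A (blk U 0 r n (n - r)) (blk S r r (n - r) (m - r)) (blk V 0 r m (m - r))"
    and "diagonal_mat (blk S 0 0 r r)" and "diagonal_mat (blk S r r (n - r) (m - r))"
    and "i < r \<Longrightarrow> sval (blk S 0 0 r r) i = sval S i"
    and "sval (blk S r r (n - r) (m - r)) j = sval S (j + r)"
proof -
  note S = is_full_svdD(3,4)[OF svd A]
  show "singular_block A (blk U 0 0 n r) (blk S 0 0 r r) (blk V 0 0 m r)"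
    using full_svd_singular_block[OF svd A, of 0 r r] r by simp
  show "singular_block A (blk U 0 r n (n - r)) (blk S r r (n - r) (m - r)) (blk V 0 r m (m - r))"
    using full_svd_singular_block[OF svd A, of r "n - r" "m - r"] r by simp
  show "diagonal_mat (blk S 0 0 r r)" "diagonal_mat (blk S r r (n - r) (m - r))"
    using diagonal_mat_blk[OF S(2)] S(1) r by auto
  show "i < r \<Longrightarrow> sval (blk S 0 0 r r) i = sval S i"
    using sval_blk[of 0 r S r i] S(1) r by auto
  show "sval (blk S r r (n - r) (m - r)) j = sval S (j + r)"
    using sval_blk_trailing[of r S j] S(1) r by auto
qed

lemma full_svd_gap_squares_neq:
  assumes svd: "is_full_svd A U S V" and svd': "is_full_svd A' U' S' V'"
    and gap: "sval S' r < sval S (r - 1)" and i: "i < r"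
  shows "(sval S' (j + r))\<^sup>2 \<noteq> (sval S i)\<^sup>2"
proof -
  have "sval S' (j + r) \<le> sval S' r" "sval S (r - 1) \<le> sval S i"
    using full_svd_sval_antimono[OF svd'] full_svd_sval_antimono[OF svd] i by auto
  then have "sval S' (j + r) < sval S i" using gap by linarith
  then show ?thesis using square_neq_of_less[OF full_svd_sval_nonneg[OF svd']] by blast
qed

context
  fixes A E U S V Ut St Vt :: "real mat" and n m r :: nat
  assumes A: "A \<in> carrier_mat n m" and E: "E \<in> carrier_mat n m"
    and r: "0 < r" "r < n" "r < m"
    and svd: "is_full_svd A U S V" and svd': "is_full_svd (A + E) Ut St Vt"
begin

lemma F12_hadamard_cross_block:
  assumes gap: "sval St r < sval S (r - 1)"
  shows "F12 S St r n \<circ>\<^sub>H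
      (transpose_mat (blk U 0 0 n r) * E * blk Vt 0 r m (m - r) * transpose_mat (blk St r r (n - r) (m - r))
      + blk S 0 0 r r * transpose_mat (blk V 0 0 m r) * transpose_mat E * blk Ut 0 r n (n - r))
    = transpose_mat (blk U 0 0 n r) * blk Ut 0 r n (n - r)"
proof -
  have AE: "A + E \<in> carrier_mat n m" using A E by simp
  note blocks = full_svd_blocks[OF svd A r(2,3)] and blocks' = full_svd_blocks[OF svd' AE r(2,3)]
  have "F12 S St r n = mat r (n - r) (\<lambda>(i,j).
      1 / ((sval (blk St r r (n - r) (m - r)) j)\<^sup>2 - (sval (blk S 0 0 r r) i)\<^sup>2))"
    unfolding F12_def blocks'(6) by (auto simp: blocks(5) intro!: eq_matI)
  then show ?thesis
    using hadamard_recovers_cross_block[OF A E blk_carrier blk_carrier blk_carrier blk_carrier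
        blk_carrier blk_carrier blocks(1) blocks'(2) blocks(3) blocks'(4)]
      full_svd_gap_squares_neq[OF svd svd' gap]
    by (simp add: blocks(5) blocks'(6))
qed

lemma F21_hadamard_cross_block:
  assumes gap: "sval S r < sval St (r - 1)"
  shows "F21 S St r n \<circ>\<^sub>H
      (transpose_mat (blk U 0 r n (n - r)) * E * blk Vt 0 0 m r * transpose_mat (blk St 0 0 r r)
      + blk S r r (n - r) (m - r) * transpose_mat (blk V 0 r m (m - r)) * transpose_mat E * blk Ut 0 0 n r)
    = transpose_mat (blk U 0 r n (n - r)) * blk Ut 0 0 n r"
proof -
  have AE: "A + E \<in> carrier_mat n m" using A E by simp
  note blocks = full_svd_blocks[OF svd A r(2,3)] and blocks' = full_svd_blocks[OF svd' AE r(2,3)]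
  have "F21 S St r n = mat (n - r) r (\<lambda>(i,j).
      1 / ((sval (blk St 0 0 r r) j)\<^sup>2 - (sval (blk S r r (n - r) (m - r)) i)\<^sup>2))"
    unfolding F21_def blocks(6) by (auto simp: blocks'(5) intro!: eq_matI)
  then show ?thesis
    using hadamard_recovers_cross_block[OF A E blk_carrier blk_carrier blk_carrier blk_carrier
        blk_carrier blk_carrier blocks(2) blocks'(1) blocks(4) blocks'(3)]
      full_svd_gap_squares_neq[OF svd' svd gap]
    by (simp add: blocks'(5) blocks(6) eq_commute)
qed

theorem sin_Theta_left_perturbation:
  assumes gaps: "sval St r < sval S (r - 1)" "sval S r < sval St (r - 1)"
  shows "spec_norm (sin_Theta (blk U 0 0 n r) (blk Ut 0 0 n r))
      = spec_norm (F12 S St r n \<circ>\<^sub>H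
          (transpose_mat (blk U 0 0 n r) * E * blk Vt 0 r m (m - r) * transpose_mat (blk St r r (n - r) (m - r))
          + blk S 0 0 r r * transpose_mat (blk V 0 0 m r) * transpose_mat E * blk Ut 0 r n (n - r)))"
    and "spec_norm (sin_Theta (blk U 0 0 n r) (blk Ut 0 0 n r))
      = spec_norm (F21 S St r n \<circ>\<^sub>H
          (transpose_mat (blk U 0 r n (n - r)) * E * blk Vt 0 0 m r * transpose_mat (blk St 0 0 r r)
          + blk S r r (n - r) (m - r) * transpose_mat (blk V 0 r m (m - r)) * transpose_mat E * blk Ut 0 0 n r))"
  unfolding F12_hadamard_cross_block[OF gaps(1)] F21_hadamard_cross_block[OF gaps(2)]
  using spec_norm_sin_Theta_cross_blocks[OF is_full_svdD(1)[OF svd A]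
      is_full_svdD(1)[OF svd' add_carrier_mat[OF E]] r(1,2)]
  by simp_all

end

lemma F12_transpose: "F12 (transpose_mat S) (transpose_mat St) r d = F12 S St r d"
  and F21_transpose: "F21 (transpose_mat S) (transpose_mat St) r d = F21 S St r d"
  unfolding F12_def F21_def sval_transpose by simp_all

theorem sin_Theta_right_perturbation:
  fixes A E U S V Ut St Vt :: "real mat"
  assumes A: "A \<in> carrier_mat n m" and E: "E \<in> carrier_mat n m"
    and r: "0 < r" "r < n" "r < m"
    and svd: "is_full_svd A U S V" and svd': "is_full_svd (A + E) Ut St Vt"
    and gaps: "sval St r < sval S (r - 1)" "sval S r < sval St (r - 1)"
  shows "spec_norm (sin_Theta (blk V 0 0 m r) (blk Vt 0 0 m r))
      = spec_norm (F12 S St r m \<circ>\<^sub>H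
          (transpose_mat (blk S 0 0 r r) * transpose_mat (blk U 0 0 n r) * E * blk Vt 0 r m (m - r)
          + transpose_mat (blk V 0 0 m r) * transpose_mat E * blk Ut 0 r n (n - r) * blk St r r (n - r) (m - r)))"
    and "spec_norm (sin_Theta (blk V 0 0 m r) (blk Vt 0 0 m r))
      = spec_norm (F21 S St r m \<circ>\<^sub>H
          (transpose_mat (blk S r r (n - r) (m - r)) * transpose_mat (blk U 0 r n (n - r)) * E * blk Vt 0 0 m r
          + transpose_mat (blk V 0 r m (m - r)) * transpose_mat E * blk Ut 0 0 n r * blk St 0 0 r r))"
proof -
  have AT: "transpose_mat A \<in> carrier_mat m n" and ET: "transpose_mat E \<in> carrier_mat m n"
    using A E by simp_all
  have svd_T: "is_full_svd (transpose_mat A + transpose_mat E) Vt (transpose_mat St) Ut"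
    using is_full_svd_transpose[OF svd'] A E by (simp add: transpose_add)
  have S: "S \<in> carrier_mat n m" and St: "St \<in> carrier_mat n m"
    using is_full_svdD(3)[OF svd A] is_full_svdD(3)[OF svd'] A E by auto
  have blk_T: "blk (transpose_mat S) 0 0 r r = transpose_mat (blk S 0 0 r r)"
    "blk (transpose_mat S) r r (m - r) (n - r) = transpose_mat (blk S r r (n - r) (m - r))"
    "transpose_mat (blk (transpose_mat St) 0 0 r r) = blk St 0 0 r r"
    "transpose_mat (blk (transpose_mat St) r r (m - r) (n - r)) = blk St r r (n - r) (m - r)"
    using S St r by (simp_all add: transpose_blk)
  note left = sin_Theta_left_perturbation[OF AT ET r(1,3,2) is_full_svd_transpose[OF svd] svd_T,
      unfolded sval_transpose F12_transpose F21_transpose, OF gaps, unfolded blk_T transpose_transpose]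
  show "spec_norm (sin_Theta (blk V 0 0 m r) (blk Vt 0 0 m r))
      = spec_norm (F12 S St r m \<circ>\<^sub>H
          (transpose_mat (blk S 0 0 r r) * transpose_mat (blk U 0 0 n r) * E * blk Vt 0 r m (m - r)
          + transpose_mat (blk V 0 0 m r) * transpose_mat E * blk Ut 0 r n (n - r) * blk St r r (n - r) (m - r)))"
    unfolding left(1) by (subst comm_add_mat) (rule refl | (intro carrier_matI; simp add: blk_def))+
  show "spec_norm (sin_Theta (blk V 0 0 m r) (blk Vt 0 0 m r))
      = spec_norm (F21 S St r m \<circ>\<^sub>H
          (transpose_mat (blk S r r (n - r) (m - r)) * transpose_mat (blk U 0 r n (n - r)) * E * blk Vt 0 0 m r
          + transpose_mat (blk V 0 r m (m - r)) * transpose_mat E * blk Ut 0 0 n r * blk St 0 0 r r))"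
    unfolding left(2) by (subst comm_add_mat) (rule refl | (intro carrier_matI; simp add: blk_def))+
qed

theorem corollary2p4:
  fixes A dA U S V Ut St Vt :: "real mat" and n m r :: nat
  assumes "A \<in> carrier_mat n m" and "dA \<in> carrier_mat n m"
    and "1 \<le> r" and "r < min n m"
    and "vec_space.rank n A \<ge> r"
    and "is_full_svd A U S V"
    and "is_full_svd (A + dA) Ut St Vt"
    and "sval S (r - 1) - sval St r > 0"
    and "sval St (r - 1) - sval S r > 0"
  shows
   "let U1 = blk U 0 0 n r; U2 = blk U 0 r n (n - r);
        V1 = blk V 0 0 m r; V2 = blk V 0 r m (m - r);
        S1 = blk S 0 0 r r; S2 = blk S r r (n - r) (m - r);
        Ut1 = blk Ut 0 0 n r; Ut2 = blk Ut 0 r n (n - r);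
        Vt1 = blk Vt 0 0 m r; Vt2 = blk Vt 0 r m (m - r);
        St1 = blk St 0 0 r r; St2 = blk St r r (n - r) (m - r);
        T = transpose_mat
    in spec_norm (sin_Theta U1 Ut1)
         = spec_norm (F12 S St r n \<circ>\<^sub>H
             (T U1 * dA * Vt2 * T St2 + S1 * T V1 * T dA * Ut2))
     \<and> spec_norm (sin_Theta U1 Ut1)
         = spec_norm (F21 S St r n \<circ>\<^sub>H
             (T U2 * dA * Vt1 * T St1 + S2 * T V2 * T dA * Ut1))
     \<and> spec_norm (sin_Theta V1 Vt1)
         = spec_norm (F12 S St r m \<circ>\<^sub>H
             (T S1 * T U1 * dA * Vt2 + T V1 * T dA * Ut2 * St2))
     \<and> spec_norm (sin_Theta V1 Vt1)
         = spec_norm (F21 S St r m \<circ>\<^sub>H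
             (T S2 * T U2 * dA * Vt1 + T V2 * T dA * Ut1 * St1))"
proof -
  have r: "0 < r" "r < n" "r < m" using assms(3,4) by auto
  have gaps: "sval St r < sval S (r - 1)" "sval S r < sval St (r - 1)" using assms(8,9) by simp_all
  \<comment> \<open>The rank hypothesis is implied by the gap \<open>sval S (r - 1) > sval St r \<ge> 0\<close> and not needed.\<close>
  show ?thesis
    unfolding Let_def
    using sin_Theta_left_perturbation[OF assms(1,2) r assms(6,7) gaps]
      sin_Theta_right_perturbation[OF assms(1,2) r assms(6,7) gaps]
    by blast
qed

end
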